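(* Let $(\mathsf Y,\mathcal F,\omega)$ be a probability space and $\mathsf Y=\bigcup_{k\in\mathcal K}\mathsf Y_k$ a partition into measurable sets indexed by a finite or countably infinite set $\mathcal K$, with $\omega(\mathsf Y_k)>0$ for all $k$. Let $T,S$ be Markov transition kernels on $(\mathsf Y,\mathcal F)$ with $\omega T=\omega S=\omega$. Suppose that for each $k\in\mathcal K$ there is a Markov transition kernel $T_k:\mathsf Y_k\times\mathcal F_k\to[0,1]$ with $\omega_kT_k=\omega_k$, and that there is $c\in[0,1]$ with $T(y,B)\ge cT_k(y,B)$ for all $k\in\mathcal K$, $y\in\mathsf Y_k$, $B\in\mathcal F_k$. Then $$1-\|TS^*\|_\omega^2\ \ge\ c^2\Big(1-\sup_{k\in\mathcal K}\|T_k\|_{\omega_k}^2\Big)\big(1-\|\bar S\|_{\bar\omega}\big).$$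
   Context: For a probability space $(\mathsf Y,\mathcal F,\omega)$: $L^2(\omega)$ is the Hilbert space of square-integrable real functions with $\langle f,g\rangle_\omega=\int fg\,d\omega$; $L_0^2(\omega)=\{f\in L^2(\omega):\int f\,d\omega=0\}$. A Markov transition kernel (Mtk) $T$ with $\omega T=\omega$ acts on $L_0^2(\omega)$ by $Tf(y)=\int T(y,dy')f(y')$; $\|T\|_\omega$ is its operator norm on $L_0^2(\omega)$ and $T^*$ its Hilbert adjoint on $L_0^2(\omega)$. For $k\in\mathcal K$, $\mathcal F_k$ is the restriction of $\mathcal F$ to $\mathsf Y_k$, and $\omega_k(B)=\omega(B)/\omega(\mathsf Y_k)$ for $B\in\mathcal F_k$. $\bar\omega$ is the probability measure on $\mathcal K$ with $\bar\omega(\{k\})=\omega(\mathsf Y_k)$, and $\bar S$ is the Mtk on $\mathcal K$ given by $\bar S(k,\{k'\})=\frac{1}{\omega(\mathsf Y_k)}\int_{\mathsf Y}\omega(dy)S(y,\mathsf Y_k)S(y,\mathsf Y_{k'})$; $\|\bar S\|_{\bar\omega}$ is its operator norm on $L_0^2(\bar\omega)$ and $\|T_k\|_{\omega_k}$ the operator norm of $T_k$ on $L_0^2(\omega_k)$. *)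

theory Defs
  imports "HOL-Probability.Probability"
begin

text \<open>A Markov transition kernel on a measurable space M, represented as a measurable
  map y |-> T y into the space of probability measures on M (so T y B = measure (T y) B).\<close>
definition markov_kernel :: "'a measure \<Rightarrow> ('a \<Rightarrow> 'a measure) \<Rightarrow> bool" where
  "markov_kernel M T \<longleftrightarrow> T \<in> M \<rightarrow>\<^sub>M prob_algebra M"

definition invariant :: "'a measure \<Rightarrow> ('a \<Rightarrow> 'a measure) \<Rightarrow> bool" where
  "invariant M T \<longleftrightarrow> (\<forall>B\<in>sets M. (\<integral>y. measure (T y) B \<partial>M) = measure M B)"

definition L2_0 :: "'a measure \<Rightarrow> ('a \<Rightarrow> real) set" where
  "L2_0 M = {f. f \<in> borel_measurable M \<and> integrable M (\<lambda>x. (f x)\<^sup>2) \<and> (\<integral>x. f x \<partial>M) = 0}"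

definition L2_inner :: "'a measure \<Rightarrow> ('a \<Rightarrow> real) \<Rightarrow> ('a \<Rightarrow> real) \<Rightarrow> real" where
  "L2_inner M f g = (\<integral>x. f x * g x \<partial>M)"

definition L2_norm :: "'a measure \<Rightarrow> ('a \<Rightarrow> real) \<Rightarrow> real" where
  "L2_norm M f = sqrt (\<integral>x. (f x)\<^sup>2 \<partial>M)"

definition kop :: "('a \<Rightarrow> 'a measure) \<Rightarrow> ('a \<Rightarrow> real) \<Rightarrow> ('a \<Rightarrow> real)" where
  "kop T f = (\<lambda>y. \<integral>x. f x \<partial>T y)"

definition op_norm :: "'a measure \<Rightarrow> (('a \<Rightarrow> real) \<Rightarrow> ('a \<Rightarrow> real)) \<Rightarrow> real" where
  "op_norm M A = Sup {L2_norm M (A f) | f. f \<in> L2_0 M \<and> L2_norm M f \<le> 1}"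

definition is_adjoint :: "'a measure \<Rightarrow> ('a \<Rightarrow> 'a measure) \<Rightarrow> (('a \<Rightarrow> real) \<Rightarrow> ('a \<Rightarrow> real)) \<Rightarrow> bool" where
  "is_adjoint M S Sstar \<longleftrightarrow> (\<forall>g\<in>L2_0 M. Sstar g \<in> L2_0 M) \<and>
     (\<forall>f\<in>L2_0 M. \<forall>g\<in>L2_0 M. L2_inner M (kop S f) g = L2_inner M f (Sstar g))"

definition restr_prob :: "'a measure \<Rightarrow> 'a set \<Rightarrow> 'a measure" where
  "restr_prob M A = scale_measure (ennreal (1 / measure M A)) (restrict_space M A)"

definition bar_measure :: "'a measure \<Rightarrow> ('k \<Rightarrow> 'a set) \<Rightarrow> 'k measure" where
  "bar_measure M Y = density (count_space UNIV) (\<lambda>k. ennreal (measure M (Y k)))"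

definition bar_kernel :: "'a measure \<Rightarrow> ('k \<Rightarrow> 'a set) \<Rightarrow> ('a \<Rightarrow> 'a measure) \<Rightarrow> 'k \<Rightarrow> 'k measure" where
  "bar_kernel M Y S k = density (count_space UNIV)
     (\<lambda>k'. ennreal (1 / measure M (Y k) * (\<integral>y. measure (S y) (Y k) * measure (S y) (Y k') \<partial>M)))"

end

theory Submission
  imports Defs
begin

text \<open>
  Write \<open>\<omega>\<^sub>Y = bar_measure \<omega> Y\<close> and \<open>S\<^sub>Y = bar_kernel \<omega> Y S\<close>, and fix \<open>g\<close> in
  \<open>L\<^sup>2\<^sub>0(\<omega>)\<close> with \<open>\<parallel>g\<parallel> \<le> 1\<close>; then \<open>h = S\<^sup>* g\<close> has \<open>\<parallel>h\<parallel> \<le> 1\<close>.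
  For \<open>y \<in> Y\<^sub>k\<close> the domination \<open>T(y,\<cdot>) \<ge> c T\<^sub>k(y,\<cdot>)\<close> gives
  \<open>c Var\<^bsub>T\<^sub>k(y,\<cdot>)\<^esub>(h) \<le> Var\<^bsub>T(y,\<cdot>)\<^esub>(h)\<close>. Integrating over \<open>\<omega>\<^sub>k\<close>, applying the
  spectral bound of \<open>T\<^sub>k\<close> to the centred part of \<open>h\<close> on \<open>Y\<^sub>k\<close> and summing over the blocks yields
  \<open>\<parallel>T h\<parallel>\<^sup>2 \<le> \<parallel>h\<parallel>\<^sup>2 - c (1 - \<lambda>\<^sup>2) (\<parallel>h\<parallel>\<^sup>2 - \<parallel>m\<parallel>\<^sup>2)\<close>, where \<open>m\<^sub>k\<close> is the mean of \<open>h\<close>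
  on \<open>Y\<^sub>k\<close> and \<open>\<parallel>m\<parallel>\<close> is the norm in \<open>L\<^sup>2(\<omega>\<^sub>Y)\<close>. The between-block energy is controlled
  by \<open>S\<^sub>Y\<close>: with \<open>u = m \<circ> block_index\<close> we have \<open>\<parallel>m\<parallel>\<^sup>2 = \<langle>u, S\<^sup>* g\<rangle> = \<langle>S u, g\<rangle> \<le> \<parallel>S u\<parallel>\<close>
  and \<open>\<parallel>S u\<parallel>\<^sup>2 = \<langle>m, S\<^sub>Y m\<rangle> \<le> \<parallel>S\<^sub>Y\<parallel> \<parallel>m\<parallel>\<^sup>2\<close>, so \<open>\<parallel>m\<parallel>\<^sup>2 \<le> \<parallel>S\<^sub>Y\<parallel>\<close>. Hence
  \<open>\<parallel>T S\<^sup>* g\<parallel>\<^sup>2 \<le> 1 - c (1 - \<lambda>\<^sup>2) (1 - \<parallel>S\<^sub>Y\<parallel>)\<close>, and \<open>c\<^sup>2 \<le> c\<close>.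
\<close>

section \<open>Markov kernels as operators on square-integrable functions\<close>

lemma square_integral_le_integral_square:
  fixes f :: "'a \<Rightarrow> real"
  assumes "prob_space N" "f \<in> borel_measurable N" "integrable N (\<lambda>x. (f x)\<^sup>2)"
  shows "(\<integral>x. f x \<partial>N)\<^sup>2 \<le> (\<integral>x. (f x)\<^sup>2 \<partial>N)"
proof -
  interpret prob_space N by fact
  have "integrable N f" using square_integrable_imp_integrable[OF assms(2,3)] .
  then have "variance f = expectation (\<lambda>x. (f x)\<^sup>2) - (expectation f)\<^sup>2"
    using assms(3) by (rule variance_eq)
  with variance_positive[of f] show ?thesis by linarith
qed

lemma integral_square_shift:
  fixes h :: "'a \<Rightarrow> real"
  assumes "prob_space N" "integrable N h" "integrable N (\<lambda>x. (h x)\<^sup>2)"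
  shows "integrable N (\<lambda>x. (h x - a)\<^sup>2)"
    and "(\<integral>x. (h x - a)\<^sup>2 \<partial>N) = (\<integral>x. (h x)\<^sup>2 \<partial>N) - 2 * a * (\<integral>x. h x \<partial>N) + a\<^sup>2"
proof -
  interpret prob_space N by fact
  have e: "(\<lambda>x. (h x - a)\<^sup>2) = (\<lambda>x. ((h x)\<^sup>2 - 2 * a * h x) + a\<^sup>2)"
    by (simp add: power2_diff algebra_simps)
  have i: "integrable N (\<lambda>x. (h x)\<^sup>2 - 2 * a * h x)"
    using assms by auto
  show "integrable N (\<lambda>x. (h x - a)\<^sup>2)"
    unfolding e using i by auto
  show "(\<integral>x. (h x - a)\<^sup>2 \<partial>N) = (\<integral>x. (h x)\<^sup>2 \<partial>N) - 2 * a * (\<integral>x. h x \<partial>N) + a\<^sup>2"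
    unfolding e using i assms by (simp add: prob_space)
qed

lemma
  fixes f g :: "'a \<Rightarrow> real"
  assumes fm: "f \<in> borel_measurable M" and gm: "g \<in> borel_measurable M"
    and f2: "integrable M (\<lambda>x. (f x)\<^sup>2)" and g2: "integrable M (\<lambda>x. (g x)\<^sup>2)"
  shows integrable_mult_square_integrable: "integrable M (\<lambda>x. f x * g x)"
    and Cauchy_Schwarz_integral:
      "(\<integral>x. f x * g x \<partial>M)\<^sup>2 \<le> (\<integral>x. (f x)\<^sup>2 \<partial>M) * (\<integral>x. (g x)\<^sup>2 \<partial>M)"
proof -
  have "\<bar>f x * g x\<bar> \<le> (f x)\<^sup>2 + (g x)\<^sup>2" for x
  proof -
    have "2 * (\<bar>f x\<bar> * \<bar>g x\<bar>) \<le> (f x)\<^sup>2 + (g x)\<^sup>2"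
      using sum_squares_bound[of "\<bar>f x\<bar>" "\<bar>g x\<bar>"] by (simp add: mult.assoc)
    moreover have "0 \<le> \<bar>f x\<bar> * \<bar>g x\<bar>" by simp
    ultimately show ?thesis unfolding abs_mult by linarith
  qed
  then show i: "integrable M (\<lambda>x. f x * g x)"
    by (intro Bochner_Integration.integrable_bound[OF Bochner_Integration.integrable_add[OF f2 g2]])
      (use fm gm in auto)
  have ia: "integrable M (\<lambda>x. \<bar>f x * g x\<bar>)" using i by simp
  have "(\<integral>\<^sup>+x. ennreal \<bar>f x\<bar> * ennreal \<bar>g x\<bar> \<partial>M)\<^sup>2 \<le>
     (\<integral>\<^sup>+x. (ennreal \<bar>f x\<bar>) ^ 2 \<partial>M) * (\<integral>\<^sup>+x. (ennreal \<bar>g x\<bar>) ^ 2 \<partial>M)"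
    using fm gm by (intro Cauchy_Schwarz_nn_integral; measurable)
  moreover have "(\<integral>\<^sup>+x. ennreal \<bar>f x\<bar> * ennreal \<bar>g x\<bar> \<partial>M) = ennreal (\<integral>x. \<bar>f x * g x\<bar> \<partial>M)"
    by (subst nn_integral_eq_integral[OF ia, symmetric]) (auto simp: ennreal_mult[symmetric] abs_mult)
  moreover have "(\<integral>\<^sup>+x. (ennreal \<bar>u x\<bar>) ^ 2 \<partial>M) = ennreal (\<integral>x. (u x)\<^sup>2 \<partial>M)"
    if "integrable M (\<lambda>x. (u x)\<^sup>2)" for u :: "'a \<Rightarrow> real"
    by (subst nn_integral_eq_integral[OF that, symmetric]) (auto intro!: nn_integral_cong simp: ennreal_power)
  ultimately have "(\<integral>x. \<bar>f x * g x\<bar> \<partial>M)\<^sup>2 \<le> (\<integral>x. (f x)\<^sup>2 \<partial>M) * (\<integral>x. (g x)\<^sup>2 \<partial>M)"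
    using f2 g2 by (simp add: ennreal_power ennreal_mult[symmetric] ennreal_le_iff)
  moreover have "(\<integral>x. f x * g x \<partial>M)\<^sup>2 \<le> (\<integral>x. \<bar>f x * g x\<bar> \<partial>M)\<^sup>2"
    using Bochner_Integration.integral_abs_bound[of M "\<lambda>x. f x * g x"]
    by (metis abs_ge_zero power2_abs power_mono)
  ultimately show "(\<integral>x. f x * g x \<partial>M)\<^sup>2 \<le> (\<integral>x. (f x)\<^sup>2 \<partial>M) * (\<integral>x. (g x)\<^sup>2 \<partial>M)"
    by linarith
qed

lemma
  assumes "markov_kernel M K" "y \<in> space M"
  shows prob_space_markov_kernel: "prob_space (K y)"
    and sets_markov_kernel: "sets (K y) = sets M"
proof -
  have "K y \<in> space (prob_algebra M)"
    using assms unfolding markov_kernel_def by (blast intro: measurable_space)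
  then show "prob_space (K y)" "sets (K y) = sets M" by (auto simp: space_prob_algebra)
qed

lemma measurable_markov_kernel_subprob_algebra:
  "markov_kernel M K \<Longrightarrow> K \<in> M \<rightarrow>\<^sub>M subprob_algebra M"
  unfolding markov_kernel_def by (rule measurable_prob_algebraD)

lemma measurable_kop:
  assumes "markov_kernel M K" "f \<in> borel_measurable M"
  shows "kop K f \<in> borel_measurable M"
  using measurable_compose[OF measurable_markov_kernel_subprob_algebra[OF assms(1)]
      integral_measurable_subprob_algebra[OF assms(2)]]
  unfolding kop_def by (simp add: o_def)

lemma measurable_nn_integral_markov_kernel:
  fixes f :: "'a \<Rightarrow> ennreal"
  assumes "markov_kernel M K" "f \<in> borel_measurable M"
  shows "(\<lambda>y. \<integral>\<^sup>+x. f x \<partial>K y) \<in> borel_measurable M"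
  using measurable_compose[OF measurable_markov_kernel_subprob_algebra[OF assms(1)]
      nn_integral_measurable_subprob_algebra[OF assms(2)]]
  by (simp add: o_def)

lemma measurable_measure_markov_kernel:
  assumes "markov_kernel M K" "B \<in> sets M"
  shows "(\<lambda>y. measure (K y) B) \<in> borel_measurable M"
  using measurable_compose[OF measurable_markov_kernel_subprob_algebra[OF assms(1)]
      measurable_emeasure_subprob_algebra[OF assms(2)]]
  unfolding measure_def by (simp add: o_def borel_measurable_enn2real)

lemma kop_mult: "kop K (\<lambda>x. r * f x) = (\<lambda>y. r * kop K f y)"
  unfolding kop_def by simp

lemma kop_nonneg: "(\<And>x. 0 \<le> f x) \<Longrightarrow> 0 \<le> kop K f y"
  unfolding kop_def by (rule Bochner_Integration.integral_nonneg) auto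

lemma bind_invariant_markov_kernel:
  assumes "prob_space M" "markov_kernel M K" "invariant M K"
  shows "bind M K = M"
proof (rule measure_eqI)
  interpret prob_space M by fact
  note sub = measurable_markov_kernel_subprob_algebra[OF assms(2)]
  show sets_eq: "sets (bind M K) = sets M"
    by (rule sets_bind[OF sets_markov_kernel[OF assms(2)] not_empty])
  fix A assume "A \<in> sets (bind M K)"
  then have A: "A \<in> sets M" using sets_eq by simp
  have "emeasure (bind M K) A = (\<integral>\<^sup>+y. emeasure (K y) A \<partial>M)"
    by (rule emeasure_bind[OF not_empty sub A])
  also have "\<dots> = (\<integral>\<^sup>+y. ennreal (measure (K y) A) \<partial>M)"
    by (intro nn_integral_cong finite_measure.emeasure_eq_measure prob_space.finite_measure
        prob_space_markov_kernel[OF assms(2)])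
  also have "\<dots> = ennreal (\<integral>y. measure (K y) A \<partial>M)"
    by (intro nn_integral_eq_integral integrable_const_bound[where B=1]
        measurable_measure_markov_kernel[OF assms(2) A] AE_I2)
      (auto dest: prob_space_markov_kernel[OF assms(2)] intro: prob_space.prob_le_1)
  also have "\<dots> = emeasure M A"
    using assms(3) A unfolding invariant_def by (simp add: emeasure_eq_measure)
  finally show "emeasure (bind M K) A = emeasure M A" .
qed

lemma nn_integral_invariant_markov_kernel:
  assumes "prob_space M" "markov_kernel M K" "invariant M K" "f \<in> borel_measurable M"
  shows "(\<integral>\<^sup>+y. (\<integral>\<^sup>+x. f x \<partial>K y) \<partial>M) = (\<integral>\<^sup>+x. f x \<partial>M)"
  using nn_integral_bind[OF assms(4) measurable_markov_kernel_subprob_algebra[OF assms(2)]]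
    bind_invariant_markov_kernel[OF assms(1-3)]
  by simp

lemma
  fixes g :: "'a \<Rightarrow> ennreal"
  assumes g: "g \<in> borel_measurable M" and fin: "(\<integral>\<^sup>+y. g y \<partial>M) < \<infinity>"
  shows integrable_enn2real: "integrable M (\<lambda>y. enn2real (g y))"
    and integral_enn2real: "(\<integral>y. enn2real (g y) \<partial>M) = enn2real (\<integral>\<^sup>+y. g y \<partial>M)"
proof -
  have "AE y in M. g y \<noteq> \<infinity>" using nn_integral_PInf_AE[OF g] fin by simp
  then have eq: "(\<integral>\<^sup>+y. ennreal (enn2real (g y)) \<partial>M) = (\<integral>\<^sup>+y. g y \<partial>M)"
    by (intro nn_integral_cong_AE) (auto simp: less_top)
  have m: "(\<lambda>y. enn2real (g y)) \<in> borel_measurable M" using g by (rule borel_measurable_enn2real)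
  show "integrable M (\<lambda>y. enn2real (g y))"
    by (rule integrableI_nonneg[OF m]) (use eq fin in auto)
  show "(\<integral>y. enn2real (g y) \<partial>M) = enn2real (\<integral>\<^sup>+y. g y \<partial>M)"
    by (subst integral_eq_nn_integral[OF m]) (auto simp: eq)
qed

lemma
  fixes f :: "'a \<Rightarrow> real"
  assumes P: "prob_space M" and K: "markov_kernel M K" and inv: "invariant M K"
    and f: "integrable M f"
  shows AE_integrable_markov_kernel: "AE y in M. integrable (K y) f"
    and integrable_kop: "integrable M (kop K f)"
    and integral_kop: "(\<integral>y. kop K f y \<partial>M) = (\<integral>x. f x \<partial>M)"
proof -
  have fm[measurable]: "f \<in> borel_measurable M" using f by simp
  have fK: "f \<in> borel_measurable (K y)" if "y \<in> space M" for y
    using measurable_cong_sets[OF sets_markov_kernel[OF K that] refl] fm by blast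
  note nn_inv = nn_integral_invariant_markov_kernel[OF P K inv]
  note nn_meas = measurable_nn_integral_markov_kernel[OF K]
  have fin: "(\<integral>\<^sup>+x. ennreal (norm (f x)) \<partial>M) < \<infinity>"
    using f by (simp add: integrable_iff_bounded)
  have "AE y in M. (\<integral>\<^sup>+x. ennreal (norm (f x)) \<partial>K y) \<noteq> \<infinity>"
    by (rule nn_integral_PInf_AE[OF nn_meas]) (use nn_inv fin in auto)
  then show ae: "AE y in M. integrable (K y) f"
    by (rule AE_mp) (auto intro!: AE_I2 simp: integrable_iff_bounded fK less_top)
  have km: "kop K f \<in> borel_measurable M" by (rule measurable_kop[OF K fm])
  have "ennreal (norm (kop K f y)) \<le> (\<integral>\<^sup>+x. ennreal (norm (f x)) \<partial>K y)" for y
    unfolding kop_def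
    using integral_norm_bound_ennreal[of "K y" f]
    by (cases "integrable (K y) f") (simp_all add: not_integrable_integral_eq)
  then have "(\<integral>\<^sup>+y. ennreal (norm (kop K f y)) \<partial>M) \<le> (\<integral>\<^sup>+y. (\<integral>\<^sup>+x. ennreal (norm (f x)) \<partial>K y) \<partial>M)"
    by (rule nn_integral_mono)
  also have "\<dots> = (\<integral>\<^sup>+x. ennreal (norm (f x)) \<partial>M)" by (rule nn_inv) simp
  finally show "integrable M (kop K f)" using fin km by (auto simp: integrable_iff_bounded)
  define P where "P y = (\<integral>\<^sup>+x. ennreal (f x) \<partial>K y)" for y
  define Q where "Q y = (\<integral>\<^sup>+x. ennreal (- f x) \<partial>K y)" for y
  have Pm: "P \<in> borel_measurable M" and Qm: "Q \<in> borel_measurable M"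
    unfolding P_def Q_def by (rule nn_meas; simp)+
  have PI: "(\<integral>\<^sup>+y. P y \<partial>M) = (\<integral>\<^sup>+x. ennreal (f x) \<partial>M)"
    and QI: "(\<integral>\<^sup>+y. Q y \<partial>M) = (\<integral>\<^sup>+x. ennreal (- f x) \<partial>M)"
    unfolding P_def Q_def by (rule nn_inv; simp)+
  have finP: "(\<integral>\<^sup>+x. ennreal (f x) \<partial>M) < \<infinity>" and finQ: "(\<integral>\<^sup>+x. ennreal (- f x) \<partial>M) < \<infinity>"
    by (rule le_less_trans[OF _ fin], rule nn_integral_mono, simp)+
  note iP = integrable_enn2real[OF Pm] integral_enn2real[OF Pm]
    and iQ = integrable_enn2real[OF Qm] integral_enn2real[OF Qm]
  have "AE y in M. kop K f y = enn2real (P y) - enn2real (Q y)"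
    using ae by (rule AE_mp) (auto intro!: AE_I2 simp: kop_def P_def Q_def real_lebesgue_integral_def)
  then have "(\<integral>y. kop K f y \<partial>M) = (\<integral>y. enn2real (P y) - enn2real (Q y) \<partial>M)"
    by (intro integral_cong_AE km) (auto intro!: borel_measurable_diff borel_measurable_enn2real Pm Qm)
  also have "\<dots> = enn2real (\<integral>\<^sup>+x. ennreal (f x) \<partial>M) - enn2real (\<integral>\<^sup>+x. ennreal (- f x) \<partial>M)"
    using iP iQ finP finQ unfolding PI QI by (simp del: ennreal_neg)
  also have "\<dots> = (\<integral>x. f x \<partial>M)" by (rule real_lebesgue_integral_def[OF f, symmetric])
  finally show "(\<integral>y. kop K f y \<partial>M) = (\<integral>x. f x \<partial>M)" .
qed

lemma
  fixes f :: "'a \<Rightarrow> real"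
  assumes P: "prob_space M" and K: "markov_kernel M K" and inv: "invariant M K"
    and fm: "f \<in> borel_measurable M" and f2: "integrable M (\<lambda>x. (f x)\<^sup>2)"
  shows integrable_kop_square: "integrable M (\<lambda>y. (kop K f y)\<^sup>2)"
    and integral_kop_square_le: "(\<integral>y. (kop K f y)\<^sup>2 \<partial>M) \<le> (\<integral>x. (f x)\<^sup>2 \<partial>M)"
proof -
  have fK: "f \<in> borel_measurable (K y)" if "y \<in> space M" for y
    using fm measurable_cong_sets[OF sets_markov_kernel[OF K that] refl] by blast
  have jensen: "AE y in M. (kop K f y)\<^sup>2 \<le> kop K (\<lambda>x. (f x)\<^sup>2) y"
    using AE_integrable_markov_kernel[OF P K inv f2] unfolding kop_def
    by (rule AE_mp) (auto intro!: AE_I2 square_integral_le_integral_square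
        prob_space_markov_kernel[OF K] fK)
  have m: "(\<lambda>y. (kop K f y)\<^sup>2) \<in> borel_measurable M"
    using measurable_kop[OF K fm] by measurable
  note i = integrable_kop[OF P K inv f2]
  show i2: "integrable M (\<lambda>y. (kop K f y)\<^sup>2)"
    by (rule Bochner_Integration.integrable_bound[OF i m]) (use jensen in auto)
  have "(\<integral>y. (kop K f y)\<^sup>2 \<partial>M) \<le> (\<integral>y. kop K (\<lambda>x. (f x)\<^sup>2) y \<partial>M)"
    by (rule integral_mono_AE[OF i2 i jensen])
  then show "(\<integral>y. (kop K f y)\<^sup>2 \<partial>M) \<le> (\<integral>x. (f x)\<^sup>2 \<partial>M)"
    using integral_kop[OF P K inv f2] by simp
qed

lemma L2_0D:
  "f \<in> L2_0 M \<Longrightarrow> f \<in> borel_measurable M"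
  "f \<in> L2_0 M \<Longrightarrow> integrable M (\<lambda>x. (f x)\<^sup>2)"
  "f \<in> L2_0 M \<Longrightarrow> (\<integral>x. f x \<partial>M) = 0"
  unfolding L2_0_def by auto

lemma zero_in_L2_0: "(\<lambda>x. 0) \<in> L2_0 M"
  unfolding L2_0_def by simp

lemma L2_norm_zero: "L2_norm M (\<lambda>x. 0) = 0"
  unfolding L2_norm_def by simp

lemma L2_norm_nonneg: "0 \<le> L2_norm M f"
  unfolding L2_norm_def by simp

lemma L2_norm_mult: "L2_norm M (\<lambda>x. r * f x) = \<bar>r\<bar> * L2_norm M f"
  unfolding L2_norm_def by (simp add: power_mult_distrib real_sqrt_mult)

lemma mult_in_L2_0: "f \<in> L2_0 M \<Longrightarrow> (\<lambda>x. r * f x) \<in> L2_0 M"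
  unfolding L2_0_def by (auto simp: power_mult_distrib)

lemma L2_norm_kop_le:
  assumes "prob_space M" "markov_kernel M K" "invariant M K" "f \<in> L2_0 M"
  shows "L2_norm M (kop K f) \<le> L2_norm M f"
  unfolding L2_norm_def using integral_kop_square_le[OF assms(1-3) L2_0D(1,2)[OF assms(4)]] by simp

lemma op_norm_le:
  assumes "\<And>f. f \<in> L2_0 M \<Longrightarrow> L2_norm M f \<le> 1 \<Longrightarrow> L2_norm M (A f) \<le> b"
  shows "op_norm M A \<le> b"
  unfolding op_norm_def
proof (rule cSup_least)
  have "(\<lambda>x. 0) \<in> L2_0 M \<and> L2_norm M (\<lambda>x. 0) \<le> 1"
    by (simp add: zero_in_L2_0 L2_norm_zero)
  then show "{L2_norm M (A f) | f. f \<in> L2_0 M \<and> L2_norm M f \<le> 1} \<noteq> {}"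
    by blast
qed (use assms in blast)

lemma op_norm_nonneg:
  assumes "\<And>f. f \<in> L2_0 M \<Longrightarrow> L2_norm M f \<le> 1 \<Longrightarrow> L2_norm M (A f) \<le> b"
  shows "0 \<le> op_norm M A"
  unfolding op_norm_def
proof (rule order.trans[OF L2_norm_nonneg cSup_upper])
  have "(\<lambda>x. 0) \<in> L2_0 M \<and> L2_norm M (\<lambda>x. 0) \<le> 1"
    by (simp add: zero_in_L2_0 L2_norm_zero)
  then show "L2_norm M (A (\<lambda>x. 0)) \<in> {L2_norm M (A f) | f. f \<in> L2_0 M \<and> L2_norm M f \<le> 1}"
    by blast
  show "bdd_above {L2_norm M (A f) | f. f \<in> L2_0 M \<and> L2_norm M f \<le> 1}"
    using assms by (auto intro!: bdd_aboveI[where M=b])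
qed

lemma L2_norm_le_op_norm:
  assumes hom: "\<And>f r. A (\<lambda>x. r * f x) = (\<lambda>x. r * A f x)"
    and contr: "\<And>f. f \<in> L2_0 M \<Longrightarrow> L2_norm M (A f) \<le> L2_norm M f"
    and f: "f \<in> L2_0 M"
  shows "L2_norm M (A f) \<le> op_norm M A * L2_norm M f"
proof (cases "L2_norm M f = 0")
  case True
  then show ?thesis using contr[OF f] by simp
next
  case False
  define r where "r = L2_norm M f"
  have r: "r > 0" using False L2_norm_nonneg[of M f] unfolding r_def by simp
  have "L2_norm M (\<lambda>x. 1 / r * f x) = \<bar>1 / r\<bar> * r"
    by (simp only: L2_norm_mult r_def)
  then have "L2_norm M (\<lambda>x. 1 / r * f x) = 1"
    using r by simp
  then have "L2_norm M (A (\<lambda>x. 1 / r * f x)) \<in> {L2_norm M (A f) | f. f \<in> L2_0 M \<and> L2_norm M f \<le> 1}"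
    using mult_in_L2_0[OF f] by fastforce
  then have "L2_norm M (A (\<lambda>x. 1 / r * f x)) \<le> op_norm M A"
    unfolding op_norm_def
    by (rule cSup_upper) (use contr in \<open>auto intro!: bdd_aboveI[where M=1] order.trans[OF contr]\<close>)
  then have "L2_norm M (A f) / r \<le> op_norm M A"
    unfolding hom L2_norm_mult using r by simp
  then show ?thesis using r by (simp add: r_def field_simps)
qed

lemma
  assumes "prob_space M" "markov_kernel M K" "invariant M K"
  shows op_norm_kop_nonneg: "0 \<le> op_norm M (kop K)"
    and op_norm_kop_le_1: "op_norm M (kop K) \<le> 1"
    and L2_norm_kop_le_op_norm:
      "f \<in> L2_0 M \<Longrightarrow> L2_norm M (kop K f) \<le> op_norm M (kop K) * L2_norm M f"
proof -
  have contr: "L2_norm M (kop K f) \<le> 1" if "f \<in> L2_0 M" "L2_norm M f \<le> 1" for f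
    using L2_norm_kop_le[OF assms that(1)] that(2) by linarith
  show "0 \<le> op_norm M (kop K)" by (rule op_norm_nonneg[OF contr])
  show "op_norm M (kop K) \<le> 1" by (rule op_norm_le[OF contr])
  show "f \<in> L2_0 M \<Longrightarrow> L2_norm M (kop K f) \<le> op_norm M (kop K) * L2_norm M f"
    by (rule L2_norm_le_op_norm[OF kop_mult L2_norm_kop_le[OF assms]])
qed

lemma integral_kop_square_le_variance:
  fixes h :: "'a \<Rightarrow> real"
  assumes P: "prob_space N" and K: "markov_kernel N K" and inv: "invariant N K"
    and h: "h \<in> borel_measurable N" and h2: "integrable N (\<lambda>x. (h x)\<^sup>2)"
  shows "(\<integral>y. (kop K h y)\<^sup>2 \<partial>N) \<le>
    (op_norm N (kop K))\<^sup>2 * ((\<integral>x. (h x)\<^sup>2 \<partial>N) - (\<integral>x. h x \<partial>N)\<^sup>2) + (\<integral>x. h x \<partial>N)\<^sup>2"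
proof -
  interpret prob_space N by fact
  define a where "a = (\<integral>x. h x \<partial>N)"
  define h0 where "h0 x = h x - a" for x
  have h1: "integrable N h" by (rule square_integrable_imp_integrable[OF h h2])
  note shift = integral_square_shift[OF P h1 h2, of a]
  have h0_m: "h0 \<in> borel_measurable N" unfolding h0_def using h by measurable
  have h0_2: "integrable N (\<lambda>x. (h0 x)\<^sup>2)" using shift(1) unfolding h0_def .
  have h0_1: "integrable N h0" unfolding h0_def using h1 by simp
  have "(\<integral>x. h0 x \<partial>N) = 0" unfolding h0_def a_def using h1 by (simp add: prob_space)
  then have h0_L2_0: "h0 \<in> L2_0 N" unfolding L2_0_def using h0_m h0_2 by simp
  have "AE y in N. kop K h y = kop K h0 y + a"
    using AE_integrable_markov_kernel[OF P K inv h1]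
  proof (rule AE_mp, intro AE_I2 impI)
    fix y assume y: "y \<in> space N" and hy: "integrable (K y) h"
    interpret Ky: prob_space "K y" by (rule prob_space_markov_kernel[OF K y])
    show "kop K h y = kop K h0 y + a"
      unfolding kop_def h0_def using hy by (simp add: Ky.prob_space)
  qed
  then have "(\<integral>y. (kop K h y)\<^sup>2 \<partial>N) = (\<integral>y. (kop K h0 y - (- a))\<^sup>2 \<partial>N)"
    using measurable_kop[OF K h] measurable_kop[OF K h0_m] by (intro integral_cong_AE) auto
  also have "\<dots> = (\<integral>y. (kop K h0 y)\<^sup>2 \<partial>N) + a\<^sup>2"
    using integral_square_shift(2)[OF P integrable_kop[OF P K inv h0_1] integrable_kop_square[OF P K inv h0_m h0_2],
        where a="- a"]
      integral_kop[OF P K inv h0_1] \<open>(\<integral>x. h0 x \<partial>N) = 0\<close>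
    by simp
  also have "(\<integral>y. (kop K h0 y)\<^sup>2 \<partial>N) \<le> (op_norm N (kop K))\<^sup>2 * (\<integral>x. (h0 x)\<^sup>2 \<partial>N)"
  proof -
    have "(L2_norm N (kop K h0))\<^sup>2 \<le> (op_norm N (kop K) * L2_norm N h0)\<^sup>2"
      by (rule power_mono[OF L2_norm_kop_le_op_norm[OF P K inv h0_L2_0] L2_norm_nonneg])
    then show ?thesis unfolding L2_norm_def by (simp add: power_mult_distrib)
  qed
  also have "(\<integral>x. (h0 x)\<^sup>2 \<partial>N) = (\<integral>x. (h x)\<^sup>2 \<partial>N) - a\<^sup>2"
    using shift(2) unfolding h0_def a_def by (simp add: power2_eq_square)
  finally show ?thesis unfolding a_def by simp
qed

section \<open>Variance under domination of measures\<close>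

lemma nn_integral_dominated_restrict:
  fixes \<phi> :: "'a \<Rightarrow> ennreal"
  assumes A: "A \<in> sets \<mu>" and sets_\<nu>: "sets \<nu> = sets (restrict_space \<mu> A)"
    and le: "\<And>B. B \<in> sets \<nu> \<Longrightarrow> c * emeasure \<nu> B \<le> emeasure \<mu> B"
    and \<phi>: "\<phi> \<in> borel_measurable \<mu>"
  shows "c * (\<integral>\<^sup>+x. \<phi> x \<partial>\<nu>) \<le> (\<integral>\<^sup>+x. \<phi> x \<partial>\<mu>)"
proof -
  have AI: "A \<inter> space \<mu> \<in> sets \<mu>" using A by simp
  have "\<phi> \<in> borel_measurable \<nu>"
    using measurable_restrict_space1[OF \<phi>] measurable_cong_sets[OF sets_\<nu> refl] by blast
  then have "c * (\<integral>\<^sup>+x. \<phi> x \<partial>\<nu>) = (\<integral>\<^sup>+x. \<phi> x \<partial>scale_measure c \<nu>)"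
    by (rule nn_integral_scale_measure[symmetric])
  also have "\<dots> \<le> (\<integral>\<^sup>+x. \<phi> x \<partial>restrict_space \<mu> A)"
  proof (rule nn_integral_mono_measure)
    show sets_eq: "sets (scale_measure c \<nu>) = sets (restrict_space \<mu> A)" using sets_\<nu> by simp
    have "emeasure (scale_measure c \<nu>) B \<le> emeasure (restrict_space \<mu> A) B" for B
    proof (cases "B \<in> sets \<nu>")
      case True
      then have "B \<subseteq> A"
        using sets_\<nu> sets.sets_into_space[of B "restrict_space \<mu> A"] by (auto simp: space_restrict_space)
      then show ?thesis using le[OF True] by (simp add: emeasure_restrict_space[OF AI])
    next
      case False
      then show ?thesis using sets_\<nu> by (simp add: emeasure_notin_sets)
    qed
    then show "scale_measure c \<nu> \<le> restrict_space \<mu> A"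
      unfolding le_measure_iff using sets_eq sets_eq_imp_space_eq[OF sets_eq] by (simp add: le_fun_def)
  qed
  also have "\<dots> = (\<integral>\<^sup>+x. \<phi> x * indicator A x \<partial>\<mu>)" by (rule nn_integral_restrict_space[OF AI])
  also have "\<dots> \<le> (\<integral>\<^sup>+x. \<phi> x \<partial>\<mu>)"
    by (rule nn_integral_mono) (simp add: indicator_def)
  finally show ?thesis .
qed

lemma variance_dominated_restrict:
  fixes h :: "'a \<Rightarrow> real"
  assumes A: "A \<in> sets \<mu>" and P\<mu>: "prob_space \<mu>" and P\<nu>: "prob_space \<nu>"
    and sets_\<nu>: "sets \<nu> = sets (restrict_space \<mu> A)" and c: "0 \<le> c"
    and le: "\<And>B. B \<in> sets \<nu> \<Longrightarrow> c * measure \<nu> B \<le> measure \<mu> B"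
    and hm: "h \<in> borel_measurable \<mu>"
    and h\<mu>: "integrable \<mu> (\<lambda>x. (h x)\<^sup>2)" and h\<nu>: "integrable \<nu> (\<lambda>x. (h x)\<^sup>2)"
  shows "c * ((\<integral>x. (h x)\<^sup>2 \<partial>\<nu>) - (\<integral>x. h x \<partial>\<nu>)\<^sup>2) \<le> (\<integral>x. (h x)\<^sup>2 \<partial>\<mu>) - (\<integral>x. h x \<partial>\<mu>)\<^sup>2"
proof -
  interpret \<mu>: prob_space \<mu> by fact
  interpret \<nu>: prob_space \<nu> by fact
  have "h \<in> borel_measurable \<nu>"
    using measurable_restrict_space1[OF hm] measurable_cong_sets[OF sets_\<nu> refl] by blast
  then have h1\<nu>: "integrable \<nu> h" using \<nu>.square_integrable_imp_integrable h\<nu> by blast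
  have h1\<mu>: "integrable \<mu> h" using \<mu>.square_integrable_imp_integrable hm h\<mu> by blast
  define a where "a = (\<integral>x. h x \<partial>\<mu>)"
  define b where "b = (\<integral>x. h x \<partial>\<nu>)"
  note shift\<mu> = integral_square_shift[OF P\<mu> h1\<mu> h\<mu>, of a]
    and shift\<nu> = integral_square_shift[OF P\<nu> h1\<nu> h\<nu>, of a]
  \<comment> \<open>The \<open>\<nu>\<close>-variance is the least value of \<open>\<integral>(h - a)\<^sup>2 d\<nu>\<close>; take \<open>a\<close> the \<open>\<mu>\<close>-mean.\<close>
  have "ennreal c * (\<integral>\<^sup>+x. ennreal ((h x - a)\<^sup>2) \<partial>\<nu>) \<le> (\<integral>\<^sup>+x. ennreal ((h x - a)\<^sup>2) \<partial>\<mu>)"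
    by (rule nn_integral_dominated_restrict[OF A sets_\<nu>])
      (use le c hm in \<open>auto simp: \<mu>.emeasure_eq_measure \<nu>.emeasure_eq_measure ennreal_mult[symmetric]\<close>)
  then have "c * (\<integral>x. (h x - a)\<^sup>2 \<partial>\<nu>) \<le> (\<integral>x. (h x - a)\<^sup>2 \<partial>\<mu>)"
    using c by (simp add: nn_integral_eq_integral[OF shift\<nu>(1)] nn_integral_eq_integral[OF shift\<mu>(1)]
        ennreal_mult[symmetric] ennreal_le_iff)
  then have "c * ((\<integral>x. (h x)\<^sup>2 \<partial>\<nu>) - b\<^sup>2 + (a - b)\<^sup>2) \<le> (\<integral>x. (h x)\<^sup>2 \<partial>\<mu>) - a\<^sup>2"
    unfolding shift\<mu>(2) shift\<nu>(2) a_def[symmetric] b_def[symmetric]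
    by (simp add: power2_eq_square algebra_simps)
  moreover have "0 \<le> c * (a - b)\<^sup>2" using c by simp
  ultimately show ?thesis unfolding a_def b_def by (simp add: algebra_simps)
qed

section \<open>Normalised restrictions and countable partitions\<close>

locale positive_event =
  fixes M :: "'a measure" and A :: "'a set"
  assumes prob_space: "prob_space M" and event: "A \<in> sets M" and positive: "measure M A > 0"
begin

lemma restr_prob_eq_density:
  "restr_prob M A = density (restrict_space M A) (\<lambda>_. ennreal (1 / measure M A))"
  unfolding restr_prob_def using positive by (intro measure_eqI) (auto simp: emeasure_density_const)

lemma space_restr_prob: "space (restr_prob M A) = A"
  unfolding restr_prob_def using event by (simp add: space_scale_measure)

lemma sets_restr_prob: "sets (restr_prob M A) = sets (restrict_space M A)"
  unfolding restr_prob_def by simp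

lemma measurable_restr_prob: "F \<in> borel_measurable M \<Longrightarrow> F \<in> borel_measurable (restr_prob M A)"
  unfolding restr_prob_eq_density by (simp add: measurable_restrict_space1)

lemma prob_space_restr_prob: "prob_space (restr_prob M A)"
proof
  interpret prob_space M by (rule prob_space)
  have "emeasure (restr_prob M A) A = ennreal (1 / measure M A) * emeasure M A"
    unfolding restr_prob_eq_density using event
    by (simp add: emeasure_density_const sets_restrict_space_iff emeasure_restrict_space)
  then show "emeasure (restr_prob M A) (space (restr_prob M A)) = 1"
    using positive by (simp add: space_restr_prob emeasure_eq_measure ennreal_mult[symmetric])
qed

lemma integral_restr_prob:
  fixes F :: "'a \<Rightarrow> real"
  assumes "F \<in> borel_measurable M"
  shows "(\<integral>x. F x \<partial>restr_prob M A) = (\<integral>x. indicator A x * F x \<partial>M) / measure M A"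
proof -
  have "(\<integral>x. F x \<partial>restr_prob M A) = (\<integral>x. F x \<partial>restrict_space M A) / measure M A"
    unfolding restr_prob_eq_density using positive assms
    by (subst integral_density) (auto intro!: measurable_restrict_space1)
  also have "(\<integral>x. F x \<partial>restrict_space M A) = (\<integral>x. indicator A x * F x \<partial>M)"
    using event by (subst integral_restrict_space) auto
  finally show ?thesis .
qed

lemma integrable_restr_prob:
  fixes F :: "'a \<Rightarrow> real"
  assumes "integrable M F"
  shows "integrable (restr_prob M A) F"
proof -
  have "integrable (restrict_space M A) F"
    using event integrable_mult_indicator[OF event assms] by (subst integrable_restrict_space) auto
  then show ?thesis unfolding restr_prob_eq_density using positive assms
    by (subst integrable_density) (auto intro!: measurable_restrict_space1)
qed

lemma AE_restr_prob: "AE x in M. Q x \<Longrightarrow> AE x in restr_prob M A. Q x"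
  unfolding restr_prob_eq_density using event
  by (subst AE_density) (auto simp: AE_restrict_space_iff elim: AE_mp)

end

lemma
  fixes Y :: "'k::countable \<Rightarrow> 'a set" and F :: "'a \<Rightarrow> real"
  assumes sf: "sigma_finite_measure N" and Y: "\<And>k. Y k \<in> sets N" and disj: "disjoint_family Y"
    and cover: "(\<Union>k. Y k) = space N" and F: "integrable N F"
  shows integrable_partition: "integrable (count_space UNIV) (\<lambda>k. \<integral>y. indicator (Y k) y * F y \<partial>N)"
    and integral_partition:
      "(\<integral>y. F y \<partial>N) = (\<integral>k. (\<integral>y. indicator (Y k) y * F y \<partial>N) \<partial>count_space UNIV)"
proof -
  interpret sigma_finite_measure N by (rule sf)
  interpret pair_sigma_finite N "count_space (UNIV :: 'k set)"
    by (intro pair_sigma_finite.intro sf sigma_finite_measure_count_space)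
  let ?H = "\<lambda>(y, k). indicator (Y k) y * F y"
  have Fm[measurable]: "F \<in> borel_measurable N" using F by simp
  have single: "(\<lambda>k. indicator (Y k) y * u) = (\<lambda>k. indicator {k0} k * u)" if "y \<in> Y k0" for y k0 u
    using disj that unfolding disjoint_family_on_def by (auto simp: indicator_def fun_eq_iff)
  have inner: "integrable (count_space UNIV) (\<lambda>k. indicator (Y k) y * u) \<and>
      (\<integral>k. indicator (Y k) y * u \<partial>count_space UNIV) = u" if "y \<in> space N" for y and u :: real
  proof -
    have "y \<in> (\<Union>k. Y k)" using cover that by simp
    then obtain k0 where "y \<in> Y k0" by blast
    moreover have "integrable (count_space UNIV) (\<lambda>k. indicator {k0} k *\<^sub>R u)"
      by (rule integrable_indicator) auto
    ultimately show ?thesis by (simp add: single measure_count_space)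
  qed
  have Hm: "?H \<in> borel_measurable (N \<Otimes>\<^sub>M count_space UNIV)"
  proof -
    have "(\<lambda>(k, y). indicator (Y k) y * F y) \<in> borel_measurable (count_space UNIV \<Otimes>\<^sub>M N)"
      by (rule measurable_pair_measure_countable1) (auto intro!: borel_measurable_times borel_measurable_indicator Y)
    then show ?thesis by (subst measurable_pair_swap_iff) (simp add: case_prod_beta)
  qed
  have HI: "integrable (N \<Otimes>\<^sub>M count_space UNIV) ?H"
  proof (rule Fubini_integrable[OF Hm])
    have "(\<integral>k. norm (indicator (Y k) y * F y) \<partial>count_space UNIV) = norm (F y)" if "y \<in> space N" for y
      using inner[OF that, of "norm (F y)"] by (simp add: abs_mult)
    then have "integrable N (\<lambda>y. \<integral>k. norm (?H (y, k)) \<partial>count_space UNIV) = integrable N (\<lambda>y. norm (F y))"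
      by (intro Bochner_Integration.integrable_cong) auto
    then show "integrable N (\<lambda>y. \<integral>k. norm (?H (y, k)) \<partial>count_space UNIV)"
      using F by simp
    show "AE y in N. integrable (count_space UNIV) (\<lambda>k. ?H (y, k))"
      using inner by (auto intro!: AE_I2)
  qed
  show "integrable (count_space UNIV) (\<lambda>k. \<integral>y. indicator (Y k) y * F y \<partial>N)"
    using integrable_snd[of "\<lambda>y k. indicator (Y k) y * F y", OF HI] by simp
  have "(\<integral>k. (\<integral>y. indicator (Y k) y * F y \<partial>N) \<partial>count_space UNIV) =
      (\<integral>y. (\<integral>k. indicator (Y k) y * F y \<partial>count_space UNIV) \<partial>N)"
    using integral_snd[of "\<lambda>y k. indicator (Y k) y * F y", OF HI]
      integral_fst[of "\<lambda>y k. indicator (Y k) y * F y", OF HI] by simp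
  also have "\<dots> = (\<integral>y. F y \<partial>N)"
    by (intro Bochner_Integration.integral_cong refl) (use inner in auto)
  finally show "(\<integral>y. F y \<partial>N) = (\<integral>k. (\<integral>y. indicator (Y k) y * F y \<partial>N) \<partial>count_space UNIV)" ..
qed

locale positive_partition =
  fixes \<omega> :: "'a measure" and Y :: "'k::countable \<Rightarrow> 'a set"
  assumes prob_space: "prob_space \<omega>"
    and sets_block: "\<And>k. Y k \<in> sets \<omega>"
    and disjoint: "disjoint_family Y"
    and cover: "(\<Union>k. Y k) = space \<omega>"
    and block_positive: "\<And>k. measure \<omega> (Y k) > 0"
begin

abbreviation weight :: "'k \<Rightarrow> real" where
  "weight k \<equiv> measure \<omega> (Y k)"

lemma weight_neq_0: "weight k \<noteq> 0"
  using block_positive[of k] by linarith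

lemma positive_event_block: "positive_event \<omega> (Y k)"
  by (intro positive_event.intro prob_space sets_block block_positive)

lemma block_subset_space: "Y k \<subseteq> space \<omega>"
  unfolding cover[symmetric] by (rule UN_upper) simp

definition block_index :: "'a \<Rightarrow> 'k" where
  "block_index y = (SOME k. y \<in> Y k)"

lemma in_block_index: "y \<in> space \<omega> \<Longrightarrow> y \<in> Y (block_index y)"
proof -
  assume "y \<in> space \<omega>"
  then have "y \<in> (\<Union>k. Y k)" using cover by simp
  then obtain k where "y \<in> Y k" by blast
  then show ?thesis unfolding block_index_def by (rule someI)
qed

lemma block_index_eq: "y \<in> Y k \<Longrightarrow> block_index y = k"
proof -
  assume y: "y \<in> Y k"
  then have "y \<in> Y (block_index y)" using block_subset_space in_block_index by blast
  with y disjoint show ?thesis unfolding disjoint_family_on_def by (metis IntI empty_iff UNIV_I)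
qed

lemma vimage_block_index: "block_index -` B \<inter> space \<omega> = (\<Union>k\<in>B. Y k)"
proof (intro set_eqI iffI)
  fix y assume "y \<in> block_index -` B \<inter> space \<omega>"
  then show "y \<in> (\<Union>k\<in>B. Y k)" using in_block_index by blast
next
  fix y assume "y \<in> (\<Union>k\<in>B. Y k)"
  then obtain k where "k \<in> B" "y \<in> Y k" by blast
  then show "y \<in> block_index -` B \<inter> space \<omega>" using block_index_eq block_subset_space by blast
qed

lemma measurable_block_index[measurable]: "block_index \<in> \<omega> \<rightarrow>\<^sub>M count_space UNIV"
proof -
  have "block_index -` {k} \<inter> space \<omega> = Y k" for k using vimage_block_index[of "{k}"] by simp
  then show ?thesis by (subst measurable_count_space_eq2_countable) (auto simp: sets_block)
qed

lemma bar_measure_eq_distr: "bar_measure \<omega> Y = distr \<omega> (count_space UNIV) block_index"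
proof (rule measure_eqI)
  interpret prob_space \<omega> by (rule prob_space)
  show "sets (bar_measure \<omega> Y) = sets (distr \<omega> (count_space UNIV) block_index)"
    unfolding bar_measure_def by simp
  fix B assume "B \<in> sets (bar_measure \<omega> Y)"
  have "emeasure (bar_measure \<omega> Y) B = (\<integral>\<^sup>+k. emeasure \<omega> (Y k) * indicator B k \<partial>count_space UNIV)"
    unfolding bar_measure_def by (subst emeasure_density) (auto simp: emeasure_eq_measure)
  also have "\<dots> = (\<integral>\<^sup>+k. emeasure \<omega> (Y k) \<partial>count_space B)"
    by (subst nn_integral_count_space_indicator) auto
  also have "\<dots> = emeasure \<omega> (\<Union>k\<in>B. Y k)"
    by (rule emeasure_UN_countable[symmetric])
      (auto simp: sets_block intro: disjoint_family_on_mono[OF _ disjoint])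
  also have "\<dots> = emeasure (distr \<omega> (count_space UNIV) block_index) B"
    by (subst emeasure_distr) (auto simp: vimage_block_index)
  finally show "emeasure (bar_measure \<omega> Y) B = emeasure (distr \<omega> (count_space UNIV) block_index) B" .
qed

lemma prob_space_bar_measure: "prob_space (bar_measure \<omega> Y)"
  unfolding bar_measure_eq_distr by (rule prob_space.prob_space_distr[OF prob_space measurable_block_index])

lemma sets_bar_measure: "sets (bar_measure \<omega> Y) = sets (count_space UNIV)"
  unfolding bar_measure_def by simp

lemma space_bar_measure: "space (bar_measure \<omega> Y) = UNIV"
  unfolding bar_measure_def by simp

lemma measurable_bar_measure: "(\<phi> :: 'k \<Rightarrow> real) \<in> borel_measurable (bar_measure \<omega> Y)"
  by (subst measurable_cong_sets[OF sets_bar_measure refl]) simp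

lemma integrable_bar_measure_iff:
  "integrable (bar_measure \<omega> Y) \<phi> \<longleftrightarrow> integrable \<omega> (\<lambda>y. (\<phi> :: 'k \<Rightarrow> real) (block_index y))"
  unfolding bar_measure_eq_distr by (rule integrable_distr_eq) auto

lemma integral_bar_measure:
  "(\<integral>k. \<phi> k \<partial>bar_measure \<omega> Y) = (\<integral>y. (\<phi> :: 'k \<Rightarrow> real) (block_index y) \<partial>\<omega>)"
  unfolding bar_measure_eq_distr by (rule integral_distr) auto

lemma integrable_bar_measure_iff_weighted:
  "integrable (bar_measure \<omega> Y) \<phi> \<longleftrightarrow> integrable (count_space UNIV) (\<lambda>k. weight k * (\<phi> :: 'k \<Rightarrow> real) k)"
  unfolding bar_measure_def by (subst integrable_density) auto

lemma integral_bar_measure_weighted: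
  "(\<integral>k. \<phi> k \<partial>bar_measure \<omega> Y) = (\<integral>k. weight k * (\<phi> :: 'k \<Rightarrow> real) k \<partial>count_space UNIV)"
  unfolding bar_measure_def by (subst integral_density) auto

lemma measurable_block_function: "(\<lambda>y. (\<phi> :: 'k \<Rightarrow> real) (block_index y)) \<in> borel_measurable \<omega>"
  by measurable

definition block_integral :: "('a \<Rightarrow> real) \<Rightarrow> 'k \<Rightarrow> real" where
  "block_integral F k = (\<integral>y. indicator (Y k) y * F y \<partial>\<omega>)"

lemma
  assumes "integrable \<omega> F"
  shows integrable_block_integral: "integrable (count_space UNIV) (block_integral F)"
    and integral_block_integral: "(\<integral>k. block_integral F k \<partial>count_space UNIV) = (\<integral>y. F y \<partial>\<omega>)"
  using integrable_partition[OF prob_space_imp_sigma_finite[OF prob_space] sets_block disjoint cover assms]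
    integral_partition[OF prob_space_imp_sigma_finite[OF prob_space] sets_block disjoint cover assms]
  unfolding block_integral_def by auto

lemma block_integral_block_function:
  "block_integral (\<lambda>y. \<phi> (block_index y) * F y) k = \<phi> k * block_integral F k"
proof -
  have "block_integral (\<lambda>y. \<phi> (block_index y) * F y) k = (\<integral>y. \<phi> k * (indicator (Y k) y * F y) \<partial>\<omega>)"
    unfolding block_integral_def
    by (rule Bochner_Integration.integral_cong) (auto simp: indicator_def block_index_eq)
  then show ?thesis unfolding block_integral_def by simp
qed

definition block_mean :: "('a \<Rightarrow> real) \<Rightarrow> 'k \<Rightarrow> real" where
  "block_mean F k = block_integral F k / weight k"

lemma integral_restr_prob_block:
  "F \<in> borel_measurable \<omega> \<Longrightarrow> (\<integral>x. F x \<partial>restr_prob \<omega> (Y k)) = block_mean F k"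
  unfolding block_mean_def block_integral_def
  by (rule positive_event.integral_restr_prob[OF positive_event_block])

lemma block_mean_square_le:
  assumes h: "h \<in> borel_measurable \<omega>" and h2: "integrable \<omega> (\<lambda>x. (h x)\<^sup>2)"
  shows "(block_mean h k)\<^sup>2 \<le> block_mean (\<lambda>x. (h x)\<^sup>2) k"
  using square_integral_le_integral_square[OF positive_event.prob_space_restr_prob[OF positive_event_block]
      positive_event.measurable_restr_prob[OF positive_event_block h]
      positive_event.integrable_restr_prob[OF positive_event_block h2]]
  by (simp add: integral_restr_prob_block[OF h] integral_restr_prob_block[OF borel_measurable_integrable[OF h2]])

lemma integrable_block_mean_square:
  assumes h: "h \<in> borel_measurable \<omega>" and h2: "integrable \<omega> (\<lambda>x. (h x)\<^sup>2)"
  shows "integrable (bar_measure \<omega> Y) (\<lambda>k. (block_mean h k)\<^sup>2)"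
  unfolding integrable_bar_measure_iff_weighted
proof (rule Bochner_Integration.integrable_bound[OF integrable_block_integral[OF h2]])
  show "AE k in count_space UNIV. norm (weight k * (block_mean h k)\<^sup>2) \<le> norm (block_integral (\<lambda>x. (h x)\<^sup>2) k)"
  proof (rule AE_I2)
    fix k
    have "weight k * (block_mean h k)\<^sup>2 \<le> weight k * block_mean (\<lambda>x. (h x)\<^sup>2) k"
      using block_mean_square_le[OF h h2] block_positive[of k] by (simp add: mult_left_mono)
    then show "norm (weight k * (block_mean h k)\<^sup>2) \<le> norm (block_integral (\<lambda>x. (h x)\<^sup>2) k)"
      using block_positive[of k] by (simp add: block_mean_def)
  qed
qed simp

lemma block_mean_in_L2_0: "h \<in> L2_0 \<omega> \<Longrightarrow> block_mean h \<in> L2_0 (bar_measure \<omega> Y)"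
proof -
  assume h: "h \<in> L2_0 \<omega>"
  note h_m = L2_0D(1)[OF h] and h2 = L2_0D(2)[OF h]
  have "integrable \<omega> h"
    by (rule finite_measure.square_integrable_imp_integrable[OF prob_space.finite_measure[OF prob_space] h_m h2])
  then have "(\<integral>k. block_mean h k \<partial>bar_measure \<omega> Y) = 0"
    unfolding integral_bar_measure_weighted block_mean_def
    using integral_block_integral L2_0D(3)[OF h] weight_neq_0 by simp
  then show ?thesis
    unfolding L2_0_def using measurable_bar_measure integrable_block_mean_square[OF h_m h2] by simp
qed

lemma block_function_in_L2_0:
  "m \<in> L2_0 (bar_measure \<omega> Y) \<Longrightarrow> (\<lambda>y. m (block_index y)) \<in> L2_0 \<omega>"
  unfolding L2_0_def integrable_bar_measure_iff integral_bar_measure by simp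

lemma integral_block_mean_mult:
  assumes h: "h \<in> borel_measurable \<omega>" and h2: "integrable \<omega> (\<lambda>x. (h x)\<^sup>2)"
  shows "(\<integral>y. block_mean h (block_index y) * h y \<partial>\<omega>) = (\<integral>k. (block_mean h k)\<^sup>2 \<partial>bar_measure \<omega> Y)"
proof -
  have "integrable \<omega> (\<lambda>y. block_mean h (block_index y) * h y)"
    using integrable_block_mean_square[OF h h2] unfolding integrable_bar_measure_iff
    by (intro integrable_mult_square_integrable[OF measurable_block_function h _ h2])
  then have "(\<integral>y. block_mean h (block_index y) * h y \<partial>\<omega>) =
      (\<integral>k. block_mean h k * block_integral h k \<partial>count_space UNIV)"
    by (simp only: integral_block_integral[symmetric] block_integral_block_function)
  also have "\<dots> = (\<integral>k. weight k * (block_mean h k)\<^sup>2 \<partial>count_space UNIV)"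
    using weight_neq_0 by (simp add: block_mean_def power2_eq_square)
  finally show ?thesis unfolding integral_bar_measure_weighted .
qed

end

section \<open>The aggregated kernel on the blocks\<close>

locale partition_kernel = positive_partition \<omega> Y
  for \<omega> :: "'a measure" and Y :: "'k::countable \<Rightarrow> 'a set" +
  fixes S :: "'a \<Rightarrow> 'a measure"
  assumes markov_S: "markov_kernel \<omega> S" and invariant_S: "invariant \<omega> S"
begin

lemma measure_S_bounds: "y \<in> space \<omega> \<Longrightarrow> 0 \<le> measure (S y) B \<and> measure (S y) B \<le> 1"
  using prob_space.prob_le_1[OF prob_space_markov_kernel[OF markov_S]] by auto

lemma kop_S_const: "y \<in> space \<omega> \<Longrightarrow> kop S (\<lambda>x. 1) y = 1"
  unfolding kop_def using prob_space.prob_space[OF prob_space_markov_kernel[OF markov_S]] by simp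

lemma
  fixes \<phi> :: "'k \<Rightarrow> real"
  assumes y: "y \<in> space \<omega>" and i: "integrable (S y) (\<lambda>x. \<phi> (block_index x))"
  shows integrable_block_function_weights:
      "integrable (count_space UNIV) (\<lambda>k. \<phi> k * measure (S y) (Y k))"
    and kop_block_function:
      "kop S (\<lambda>x. \<phi> (block_index x)) y = (\<integral>k. \<phi> k * measure (S y) (Y k) \<partial>count_space UNIV)"
proof -
  have sets_Sy: "sets (S y) = sets \<omega>" by (rule sets_markov_kernel[OF markov_S y])
  have Y: "Y k \<in> sets (S y)" for k using sets_block sets_Sy by simp
  have cover': "(\<Union>k. Y k) = space (S y)" using cover sets_eq_imp_space_eq[OF sets_Sy] by simp
  note partition = integrable_partition[OF _ Y disjoint cover' i] integral_partition[OF _ Y disjoint cover' i]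
  have sf: "sigma_finite_measure (S y)"
    by (rule prob_space_imp_sigma_finite[OF prob_space_markov_kernel[OF markov_S y]])
  have block: "(\<integral>x. indicator (Y k) x * \<phi> (block_index x) \<partial>S y) = \<phi> k * measure (S y) (Y k)" for k
  proof -
    have "(\<integral>x. indicator (Y k) x * \<phi> (block_index x) \<partial>S y) = (\<integral>x. \<phi> k * indicator (Y k) x \<partial>S y)"
      by (rule Bochner_Integration.integral_cong[OF refl]) (auto simp: indicator_def block_index_eq)
    then show ?thesis using Y[of k] by (simp add: Int_absorb2 sets.sets_into_space)
  qed
  show "integrable (count_space UNIV) (\<lambda>k. \<phi> k * measure (S y) (Y k))"
    using partition(1)[OF sf] unfolding block .
  show "kop S (\<lambda>x. \<phi> (block_index x)) y = (\<integral>k. \<phi> k * measure (S y) (Y k) \<partial>count_space UNIV)"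
    unfolding kop_def using partition(2)[OF sf] unfolding block .
qed

lemma
  fixes \<phi> :: "'k \<Rightarrow> real" and F :: "'a \<Rightarrow> real"
  assumes F: "F \<in> borel_measurable \<omega>"
    and ae: "AE y in \<omega>. integrable (S y) (\<lambda>x. \<phi> (block_index x))"
    and ae_abs: "AE y in \<omega>. integrable (S y) (\<lambda>x. \<bar>\<phi> (block_index x)\<bar>)"
    and dominated: "integrable \<omega> (\<lambda>y. \<bar>F y\<bar> * kop S (\<lambda>x. \<bar>\<phi> (block_index x)\<bar>) y)"
  shows integrable_weighted_block_function:
      "integrable (count_space UNIV) (\<lambda>k. \<phi> k * (\<integral>y. F y * measure (S y) (Y k) \<partial>\<omega>))"
    and integral_mult_kop_block_function:
      "(\<integral>k. \<phi> k * (\<integral>y. F y * measure (S y) (Y k) \<partial>\<omega>) \<partial>count_space UNIV) =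
       (\<integral>y. F y * kop S (\<lambda>x. \<phi> (block_index x)) y \<partial>\<omega>)"
proof -
  interpret prob_space \<omega> by (rule prob_space)
  interpret pair_sigma_finite \<omega> "count_space (UNIV :: 'k set)"
    by (intro pair_sigma_finite.intro sigma_finite_measure_count_space) unfold_locales
  define G where "G = (\<lambda>(y, k). F y * (\<phi> k * measure (S y) (Y k)))"
  have G: "G \<in> borel_measurable (\<omega> \<Otimes>\<^sub>M count_space UNIV)"
  proof -
    have "(\<lambda>(k, y). F y * (\<phi> k * measure (S y) (Y k))) \<in> borel_measurable (count_space UNIV \<Otimes>\<^sub>M \<omega>)"
      using F measurable_measure_markov_kernel[OF markov_S sets_block]
      by (intro measurable_pair_measure_countable1) simp_all
    then show ?thesis unfolding G_def by (subst measurable_pair_swap_iff) (simp add: case_prod_beta)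
  qed
  have norm_inner: "AE y in \<omega>. (\<integral>k. norm (G (y, k)) \<partial>count_space UNIV) =
      \<bar>F y\<bar> * kop S (\<lambda>x. \<bar>\<phi> (block_index x)\<bar>) y"
    using ae_abs
  proof (rule AE_mp, intro AE_I2 impI)
    fix y assume y: "y \<in> space \<omega>" and i: "integrable (S y) (\<lambda>x. \<bar>\<phi> (block_index x)\<bar>)"
    have "(\<integral>k. norm (G (y, k)) \<partial>count_space UNIV) =
        \<bar>F y\<bar> * (\<integral>k. \<bar>\<phi> k\<bar> * measure (S y) (Y k) \<partial>count_space UNIV)"
      unfolding G_def using measure_S_bounds[OF y] by (simp add: abs_mult)
    then show "(\<integral>k. norm (G (y, k)) \<partial>count_space UNIV) = \<bar>F y\<bar> * kop S (\<lambda>x. \<bar>\<phi> (block_index x)\<bar>) y"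
      using kop_block_function[OF y i] by simp
  qed
  have GI: "integrable (\<omega> \<Otimes>\<^sub>M count_space UNIV) G"
  proof (rule Fubini_integrable[OF G])
    show "integrable \<omega> (\<lambda>y. \<integral>k. norm (G (y, k)) \<partial>count_space UNIV)"
      using dominated G by (subst integrable_cong_AE[OF _ _ norm_inner]) auto
    show "AE y in \<omega>. integrable (count_space UNIV) (\<lambda>k. G (y, k))"
      using ae by (rule AE_mp) (auto intro!: AE_I2 simp: G_def intro: integrable_block_function_weights)
  qed
  have inner: "AE y in \<omega>. (\<integral>k. G (y, k) \<partial>count_space UNIV) = F y * kop S (\<lambda>x. \<phi> (block_index x)) y"
    using ae by (rule AE_mp) (auto intro!: AE_I2 simp: G_def kop_block_function)
  have outer: "(\<integral>y. G (y, k) \<partial>\<omega>) = \<phi> k * (\<integral>y. F y * measure (S y) (Y k) \<partial>\<omega>)" for k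
  proof -
    have "(\<lambda>y. G (y, k)) = (\<lambda>y. \<phi> k * (F y * measure (S y) (Y k)))"
      unfolding G_def by (simp add: ac_simps)
    then show ?thesis by simp
  qed
  show "integrable (count_space UNIV) (\<lambda>k. \<phi> k * (\<integral>y. F y * measure (S y) (Y k) \<partial>\<omega>))"
    using integrable_snd[of "\<lambda>y k. G (y, k)"] GI unfolding outer by simp
  have "(\<integral>k. \<phi> k * (\<integral>y. F y * measure (S y) (Y k) \<partial>\<omega>) \<partial>count_space UNIV) =
      (\<integral>y. (\<integral>k. G (y, k) \<partial>count_space UNIV) \<partial>\<omega>)"
    using integral_snd[of "\<lambda>y k. G (y, k)"] integral_fst[of "\<lambda>y k. G (y, k)"] GI
    unfolding outer by simp
  also have "\<dots> = (\<integral>y. F y * kop S (\<lambda>x. \<phi> (block_index x)) y \<partial>\<omega>)"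
  proof (rule integral_cong_AE[OF _ _ inner])
    show "(\<lambda>y. \<integral>k. G (y, k) \<partial>count_space UNIV) \<in> borel_measurable \<omega>" using G by measurable
    show "(\<lambda>y. F y * kop S (\<lambda>x. \<phi> (block_index x)) y) \<in> borel_measurable \<omega>"
      using F measurable_kop[OF markov_S measurable_block_function] by measurable
  qed
  finally show "(\<integral>k. \<phi> k * (\<integral>y. F y * measure (S y) (Y k) \<partial>\<omega>) \<partial>count_space UNIV) =
      (\<integral>y. F y * kop S (\<lambda>x. \<phi> (block_index x)) y \<partial>\<omega>)" .
qed

lemma integrable_bounded:
  fixes F :: "'a \<Rightarrow> real"
  assumes "F \<in> borel_measurable \<omega>" "\<And>y. y \<in> space \<omega> \<Longrightarrow> \<bar>F y\<bar> \<le> B"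
  shows "integrable \<omega> F"
  using assms by (intro finite_measure.integrable_const_bound[OF prob_space.finite_measure[OF prob_space]])
    (auto intro!: AE_I2)

lemma
  fixes \<phi> :: "'k \<Rightarrow> real" and F :: "'a \<Rightarrow> real"
  assumes F: "F \<in> borel_measurable \<omega>" and F_le: "\<And>y. y \<in> space \<omega> \<Longrightarrow> \<bar>F y\<bar> \<le> 1"
    and \<phi>_le: "\<And>k. \<bar>\<phi> k\<bar> \<le> 1"
  shows integrable_weighted_bounded_block_function:
      "integrable (count_space UNIV) (\<lambda>k. \<phi> k * (\<integral>y. F y * measure (S y) (Y k) \<partial>\<omega>))"
    and integral_mult_kop_bounded_block_function:
      "(\<integral>k. \<phi> k * (\<integral>y. F y * measure (S y) (Y k) \<partial>\<omega>) \<partial>count_space UNIV) =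
       (\<integral>y. F y * kop S (\<lambda>x. \<phi> (block_index x)) y \<partial>\<omega>)"
proof -
  have i: "integrable \<omega> (\<lambda>x. \<phi> (block_index x))" "integrable \<omega> (\<lambda>x. \<bar>\<phi> (block_index x)\<bar>)"
    by (rule integrable_bounded[where B=1]; use \<phi>_le in simp)+
  note kop_abs = integrable_kop[OF prob_space markov_S invariant_S i(2)]
  have "integrable \<omega> (\<lambda>y. \<bar>F y\<bar> * kop S (\<lambda>x. \<bar>\<phi> (block_index x)\<bar>) y)"
  proof (rule Bochner_Integration.integrable_bound[OF kop_abs])
    show "(\<lambda>y. \<bar>F y\<bar> * kop S (\<lambda>x. \<bar>\<phi> (block_index x)\<bar>) y) \<in> borel_measurable \<omega>"
      using F kop_abs by measurable
    show "AE y in \<omega>. norm (\<bar>F y\<bar> * kop S (\<lambda>x. \<bar>\<phi> (block_index x)\<bar>) y)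
        \<le> norm (kop S (\<lambda>x. \<bar>\<phi> (block_index x)\<bar>) y)"
      using F_le kop_nonneg[of "\<lambda>x. \<bar>\<phi> (block_index x)\<bar>" S]
      by (intro AE_I2) (simp add: abs_mult mult_left_le_one_le)
  qed
  with AE_integrable_markov_kernel[OF prob_space markov_S invariant_S] i F
  show "integrable (count_space UNIV) (\<lambda>k. \<phi> k * (\<integral>y. F y * measure (S y) (Y k) \<partial>\<omega>))"
    and "(\<integral>k. \<phi> k * (\<integral>y. F y * measure (S y) (Y k) \<partial>\<omega>) \<partial>count_space UNIV) =
       (\<integral>y. F y * kop S (\<lambda>x. \<phi> (block_index x)) y \<partial>\<omega>)"
    by (auto intro!: integrable_weighted_block_function integral_mult_kop_block_function)
qed

definition block_overlap :: "'k \<Rightarrow> 'k \<Rightarrow> real" where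
  "block_overlap k k' = (\<integral>y. measure (S y) (Y k) * measure (S y) (Y k') \<partial>\<omega>)"

lemma bar_kernel_eq: "bar_kernel \<omega> Y S k = density (count_space UNIV) (\<lambda>k'. ennreal (block_overlap k k' / weight k))"
  unfolding bar_kernel_def block_overlap_def by simp

lemma block_overlap_nonneg: "0 \<le> block_overlap k k'"
  unfolding block_overlap_def by (rule integral_nonneg_AE) (auto intro!: AE_I2)

lemma abs_measure_S_le_1: "y \<in> space \<omega> \<Longrightarrow> \<bar>measure (S y) B\<bar> \<le> 1"
  using measure_S_bounds by fastforce

lemma
  shows integrable_block_overlap_indicator:
      "integrable (count_space UNIV) (\<lambda>k'. indicator B k' * block_overlap k k')"
    and integral_block_overlap_indicator:
      "(\<integral>k'. indicator B k' * block_overlap k k' \<partial>count_space UNIV) =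
       (\<integral>y. measure (S y) (Y k) * kop S (\<lambda>x. indicator B (block_index x)) y \<partial>\<omega>)"
  using integrable_weighted_bounded_block_function[of "\<lambda>y. measure (S y) (Y k)" "indicator B"]
    integral_mult_kop_bounded_block_function[of "\<lambda>y. measure (S y) (Y k)" "indicator B"]
    measurable_measure_markov_kernel[OF markov_S sets_block] abs_measure_S_le_1
  unfolding block_overlap_def by auto

lemma integral_block_overlap: "(\<integral>k'. block_overlap k k' \<partial>count_space UNIV) = weight k"
proof -
  have "(\<integral>k'. block_overlap k k' \<partial>count_space UNIV) = (\<integral>y. measure (S y) (Y k) * kop S (\<lambda>x. 1) y \<partial>\<omega>)"
    using integral_block_overlap_indicator[of UNIV k] by simp
  also have "\<dots> = (\<integral>y. measure (S y) (Y k) \<partial>\<omega>)"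
    by (rule Bochner_Integration.integral_cong) (auto simp: kop_S_const)
  also have "\<dots> = weight k"
    using invariant_S sets_block unfolding invariant_def by blast
  finally show ?thesis .
qed

lemma integrable_block_overlap: "integrable (count_space UNIV) (block_overlap k)"
  using integrable_block_overlap_indicator[of UNIV k] by simp

lemma measure_bar_kernel:
  "measure (bar_kernel \<omega> Y S k) B = (\<integral>k'. indicator B k' * block_overlap k k' \<partial>count_space UNIV) / weight k"
proof -
  have i: "integrable (count_space UNIV) (\<lambda>k'. block_overlap k k' / weight k * indicator B k')"
    using integrable_block_overlap_indicator[of B k] by (simp add: ac_simps)
  have "emeasure (bar_kernel \<omega> Y S k) B =
      (\<integral>\<^sup>+k'. ennreal (block_overlap k k' / weight k * indicator B k') \<partial>count_space UNIV)"
    unfolding bar_kernel_eq by (subst emeasure_density) (auto intro!: nn_integral_cong simp: indicator_def)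
  also have "\<dots> = ennreal (\<integral>k'. block_overlap k k' / weight k * indicator B k' \<partial>count_space UNIV)"
    using block_positive[of k] block_overlap_nonneg by (intro nn_integral_eq_integral[OF i]) auto
  finally show ?thesis
    unfolding measure_def using block_positive[of k] block_overlap_nonneg
    by (simp add: integral_nonneg_AE ac_simps)
qed

lemma prob_space_bar_kernel: "prob_space (bar_kernel \<omega> Y S k)"
proof
  have i: "integrable (count_space UNIV) (\<lambda>k'. block_overlap k k' / weight k)"
    using integrable_block_overlap[of k] by simp
  have "emeasure (bar_kernel \<omega> Y S k) (space (bar_kernel \<omega> Y S k)) =
      (\<integral>\<^sup>+k'. ennreal (block_overlap k k' / weight k) \<partial>count_space UNIV)"
    unfolding bar_kernel_eq by (subst emeasure_density) auto
  also have "\<dots> = ennreal (\<integral>k'. block_overlap k k' / weight k \<partial>count_space UNIV)"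
    using block_positive[of k] block_overlap_nonneg by (intro nn_integral_eq_integral[OF i]) auto
  also have "\<dots> = 1" using integral_block_overlap[of k] weight_neq_0[of k] by simp
  finally show "emeasure (bar_kernel \<omega> Y S k) (space (bar_kernel \<omega> Y S k)) = 1" .
qed

lemma markov_kernel_bar_kernel: "markov_kernel (bar_measure \<omega> Y) (bar_kernel \<omega> Y S)"
  unfolding markov_kernel_def measurable_cong_sets[OF sets_bar_measure refl]
  using prob_space_bar_kernel by (auto simp: space_prob_algebra bar_kernel_eq sets_bar_measure)

lemma invariant_bar_kernel: "invariant (bar_measure \<omega> Y) (bar_kernel \<omega> Y S)"
  unfolding invariant_def
proof
  fix B assume "B \<in> sets (bar_measure \<omega> Y)"
  define F where "F y = kop S (\<lambda>x. indicator B (block_index x)) y" for y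
  have F: "F \<in> borel_measurable \<omega>"
    unfolding F_def by (rule measurable_kop[OF markov_S measurable_block_function])
  have F_le: "\<bar>F y\<bar> \<le> 1" if "y \<in> space \<omega>" for y
  proof -
    have "F y = (\<integral>x. indicator (block_index -` B) x \<partial>S y)"
      unfolding F_def kop_def by (simp add: indicator_def)
    then have "F y = measure (S y) (block_index -` B \<inter> space (S y))" by simp
    then show ?thesis using prob_space.prob_le_1[OF prob_space_markov_kernel[OF markov_S that]] by simp
  qed
  have "(\<integral>k. measure (bar_kernel \<omega> Y S k) B \<partial>bar_measure \<omega> Y) =
      (\<integral>k. 1 * (\<integral>y. F y * measure (S y) (Y k) \<partial>\<omega>) \<partial>count_space UNIV)"
    unfolding integral_bar_measure_weighted measure_bar_kernel integral_block_overlap_indicator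
    using weight_neq_0 by (simp add: F_def ac_simps)
  also have "\<dots> = (\<integral>y. F y * kop S (\<lambda>x. 1) y \<partial>\<omega>)"
    using integral_mult_kop_bounded_block_function[OF F F_le, of "\<lambda>_. 1"] by simp
  also have "\<dots> = (\<integral>y. F y \<partial>\<omega>)"
    by (rule Bochner_Integration.integral_cong) (auto simp: kop_S_const)
  also have "\<dots> = (\<integral>y. indicator B (block_index y) \<partial>\<omega>)"
    unfolding F_def
    by (rule integral_kop[OF prob_space markov_S invariant_S integrable_bounded[OF measurable_block_function]])
      auto
  also have "\<dots> = measure (bar_measure \<omega> Y) B"
    by (simp add: integral_bar_measure[symmetric] space_bar_measure)
  finally show "(\<integral>k. measure (bar_kernel \<omega> Y S k) B \<partial>bar_measure \<omega> Y) = measure (bar_measure \<omega> Y) B" .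
qed

lemma kop_bar_kernel:
  "kop (bar_kernel \<omega> Y S) m k = (\<integral>k'. m k' * block_overlap k k' \<partial>count_space UNIV) / weight k"
  unfolding kop_def bar_kernel_eq using block_positive block_overlap_nonneg
  by (subst integral_density) (auto simp: less_imp_le ac_simps)

text \<open>Both sides equal \<open>\<Sum>k k'. m k * m k' * block_overlap k k'\<close>, by Fubini.\<close>

lemma integral_kop_block_function_square:
  fixes m :: "'k \<Rightarrow> real"
  assumes m2: "integrable (bar_measure \<omega> Y) (\<lambda>k. (m k)\<^sup>2)"
  shows "(\<integral>y. (kop S (\<lambda>x. m (block_index x)) y)\<^sup>2 \<partial>\<omega>) =
    (\<integral>k. m k * kop (bar_kernel \<omega> Y S) m k \<partial>bar_measure \<omega> Y)"
proof -
  define u where "u y = m (block_index y)" for y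
  define Su where "Su = kop S u"
  have u: "u \<in> borel_measurable \<omega>" unfolding u_def by (rule measurable_block_function)
  have u2: "integrable \<omega> (\<lambda>y. (u y)\<^sup>2)" using m2 unfolding integrable_bar_measure_iff u_def .
  have u_abs2: "integrable \<omega> (\<lambda>y. \<bar>u y\<bar>\<^sup>2)" using u2 by simp
  have u1: "integrable \<omega> u"
    using finite_measure.square_integrable_imp_integrable[OF prob_space.finite_measure[OF prob_space] u u2] .
  note kop_props = prob_space markov_S invariant_S
  have Su: "Su \<in> borel_measurable \<omega>" unfolding Su_def by (rule measurable_kop[OF markov_S u])
  have Su2: "integrable \<omega> (\<lambda>y. (Su y)\<^sup>2)" unfolding Su_def by (rule integrable_kop_square[OF kop_props u u2])
  have ae: "AE y in \<omega>. integrable (S y) (\<lambda>x. m (block_index x))"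
    and ae_abs: "AE y in \<omega>. integrable (S y) (\<lambda>x. \<bar>m (block_index x)\<bar>)"
    using AE_integrable_markov_kernel[OF kop_props u1] AE_integrable_markov_kernel[OF kop_props integrable_abs[OF u1]]
    unfolding u_def by auto
  have S_abs: "kop S (\<lambda>x. \<bar>u x\<bar>) \<in> borel_measurable \<omega>"
    using u by (intro measurable_kop[OF markov_S]) measurable
  have S_abs2: "integrable \<omega> (\<lambda>y. (kop S (\<lambda>x. \<bar>u x\<bar>) y)\<^sup>2)"
    using u u_abs2 by (intro integrable_kop_square[OF kop_props]) auto
  define Z where "Z k = (\<integral>y. Su y * measure (S y) (Y k) \<partial>\<omega>)" for k
  have "integrable \<omega> (\<lambda>y. \<bar>Su y\<bar> * kop S (\<lambda>x. \<bar>u x\<bar>) y)"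
    using integrable_mult_square_integrable[of "\<lambda>y. \<bar>Su y\<bar>" \<omega> "kop S (\<lambda>x. \<bar>u x\<bar>)"] Su S_abs Su2 S_abs2
    by simp
  then have square: "(\<integral>y. (Su y)\<^sup>2 \<partial>\<omega>) = (\<integral>k. m k * Z k \<partial>count_space UNIV)"
    using integral_mult_kop_block_function[OF Su ae ae_abs]
    unfolding Z_def Su_def u_def by (simp add: power2_eq_square)
  have kop_bar: "kop (bar_kernel \<omega> Y S) m k = Z k / weight k" for k
  proof -
    have "integrable \<omega> (\<lambda>y. \<bar>measure (S y) (Y k)\<bar> * kop S (\<lambda>x. \<bar>u x\<bar>) y)"
    proof (rule Bochner_Integration.integrable_bound[OF integrable_kop[OF kop_props integrable_abs[OF u1]]])
      show "(\<lambda>y. \<bar>measure (S y) (Y k)\<bar> * kop S (\<lambda>x. \<bar>u x\<bar>) y) \<in> borel_measurable \<omega>"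
        using measurable_measure_markov_kernel[OF markov_S sets_block] S_abs by measurable
      show "AE y in \<omega>. norm (\<bar>measure (S y) (Y k)\<bar> * kop S (\<lambda>x. \<bar>u x\<bar>) y) \<le> norm (kop S (\<lambda>x. \<bar>u x\<bar>) y)"
        using abs_measure_S_le_1 kop_nonneg[of "\<lambda>x. \<bar>u x\<bar>" S]
        by (intro AE_I2) (simp add: abs_mult mult_left_le_one_le)
    qed
    then have "(\<integral>k'. m k' * block_overlap k k' \<partial>count_space UNIV) =
        (\<integral>y. measure (S y) (Y k) * Su y \<partial>\<omega>)"
      using integral_mult_kop_block_function[OF measurable_measure_markov_kernel[OF markov_S sets_block] ae ae_abs]
      unfolding block_overlap_def Su_def u_def by simp
    also have "\<dots> = Z k" unfolding Z_def by (simp add: mult.commute)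
    finally show ?thesis unfolding kop_bar_kernel by simp
  qed
  show ?thesis
    unfolding integral_bar_measure_weighted kop_bar square[unfolded Su_def u_def]
    using weight_neq_0 by (intro Bochner_Integration.integral_cong) auto
qed

lemma integral_kop_block_function_square_le:
  fixes m :: "'k \<Rightarrow> real"
  assumes m: "m \<in> L2_0 (bar_measure \<omega> Y)"
  shows "(\<integral>y. (kop S (\<lambda>x. m (block_index x)) y)\<^sup>2 \<partial>\<omega>) \<le>
    op_norm (bar_measure \<omega> Y) (kop (bar_kernel \<omega> Y S)) * (\<integral>k. (m k)\<^sup>2 \<partial>bar_measure \<omega> Y)"
proof -
  let ?\<sigma> = "op_norm (bar_measure \<omega> Y) (kop (bar_kernel \<omega> Y S))"
  note bar = prob_space_bar_measure markov_kernel_bar_kernel invariant_bar_kernel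
  note m2 = L2_0D(2)[OF m]
  have "(\<integral>k. m k * kop (bar_kernel \<omega> Y S) m k \<partial>bar_measure \<omega> Y)\<^sup>2 \<le>
      (\<integral>k. (m k)\<^sup>2 \<partial>bar_measure \<omega> Y) * (\<integral>k. (kop (bar_kernel \<omega> Y S) m k)\<^sup>2 \<partial>bar_measure \<omega> Y)"
    by (rule Cauchy_Schwarz_integral[OF measurable_bar_measure measurable_bar_measure m2
          integrable_kop_square[OF bar measurable_bar_measure m2]])
  also have "\<dots> \<le> (\<integral>k. (m k)\<^sup>2 \<partial>bar_measure \<omega> Y) * (?\<sigma>\<^sup>2 * (\<integral>k. (m k)\<^sup>2 \<partial>bar_measure \<omega> Y))"
  proof (rule mult_left_mono)
    have "(L2_norm (bar_measure \<omega> Y) (kop (bar_kernel \<omega> Y S) m))\<^sup>2 \<le> (?\<sigma> * L2_norm (bar_measure \<omega> Y) m)\<^sup>2"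
      by (rule power_mono[OF L2_norm_kop_le_op_norm[OF bar m] L2_norm_nonneg])
    then show "(\<integral>k. (kop (bar_kernel \<omega> Y S) m k)\<^sup>2 \<partial>bar_measure \<omega> Y) \<le> ?\<sigma>\<^sup>2 * (\<integral>k. (m k)\<^sup>2 \<partial>bar_measure \<omega> Y)"
      unfolding L2_norm_def by (simp add: power_mult_distrib)
  qed simp
  finally have "(\<integral>k. m k * kop (bar_kernel \<omega> Y S) m k \<partial>bar_measure \<omega> Y)\<^sup>2 \<le>
      (?\<sigma> * (\<integral>k. (m k)\<^sup>2 \<partial>bar_measure \<omega> Y))\<^sup>2"
    by (simp add: power2_eq_square ac_simps)
  then show ?thesis
    unfolding integral_kop_block_function_square[OF m2]
    by (rule power2_le_imp_le) (simp add: op_norm_kop_nonneg[OF bar])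
qed

end

section \<open>The decomposition bound\<close>

locale markov_decomposition = partition_kernel \<omega> Y S
  for \<omega> :: "'a measure" and Y :: "'k::countable \<Rightarrow> 'a set" and S :: "'a \<Rightarrow> 'a measure" +
  fixes T :: "'a \<Rightarrow> 'a measure" and Sstar :: "('a \<Rightarrow> real) \<Rightarrow> ('a \<Rightarrow> real)"
    and Tk :: "'k \<Rightarrow> 'a \<Rightarrow> 'a measure" and c :: real
  assumes markov_T: "markov_kernel \<omega> T" and invariant_T: "invariant \<omega> T"
    and adjoint: "is_adjoint \<omega> S Sstar"
    and markov_Tk: "\<And>k. markov_kernel (restr_prob \<omega> (Y k)) (Tk k)"
    and invariant_Tk: "\<And>k. invariant (restr_prob \<omega> (Y k)) (Tk k)"
    and c_nonneg: "0 \<le> c" and c_le_1: "c \<le> 1"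
    and T_dominates: "\<And>k y B. y \<in> Y k \<Longrightarrow> B \<in> sets (restr_prob \<omega> (Y k)) \<Longrightarrow>
           measure (T y) B \<ge> c * measure (Tk k y) B"
begin

abbreviation local_norm :: "'k \<Rightarrow> real" where
  "local_norm k \<equiv> op_norm (restr_prob \<omega> (Y k)) (kop (Tk k))"

abbreviation sup_local_norm_sq :: real where
  "sup_local_norm_sq \<equiv> SUP k. (local_norm k)\<^sup>2"

abbreviation bar_norm :: real where
  "bar_norm \<equiv> op_norm (bar_measure \<omega> Y) (kop (bar_kernel \<omega> Y S))"

lemma local_markov_kernel:
  "prob_space (restr_prob \<omega> (Y k))" "markov_kernel (restr_prob \<omega> (Y k)) (Tk k)"
  "invariant (restr_prob \<omega> (Y k)) (Tk k)"
  using positive_event.prob_space_restr_prob[OF positive_event_block] markov_Tk invariant_Tk by auto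

lemma
  shows local_norm_sq_le_sup: "(local_norm k)\<^sup>2 \<le> sup_local_norm_sq"
    and sup_local_norm_sq_nonneg: "0 \<le> sup_local_norm_sq"
    and sup_local_norm_sq_le_1: "sup_local_norm_sq \<le> 1"
proof -
  have le_1: "(local_norm k)\<^sup>2 \<le> 1" for k
    using op_norm_kop_nonneg[OF local_markov_kernel] op_norm_kop_le_1[OF local_markov_kernel]
    by (simp add: power_le_one)
  have "bdd_above (range (\<lambda>k. (local_norm k)\<^sup>2))" by (rule bdd_aboveI[where M=1]) (use le_1 in auto)
  then show le_sup: "(local_norm k)\<^sup>2 \<le> sup_local_norm_sq" for k by (rule cSUP_upper[OF UNIV_I])
  show "0 \<le> sup_local_norm_sq" by (rule order.trans[OF zero_le_power2 le_sup])
  show "sup_local_norm_sq \<le> 1" by (rule cSUP_least) (use le_1 in auto)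
qed

lemma bar_norm_nonneg: "0 \<le> bar_norm" and bar_norm_le_1: "bar_norm \<le> 1"
  using op_norm_kop_nonneg op_norm_kop_le_1 prob_space_bar_measure markov_kernel_bar_kernel
    invariant_bar_kernel by blast+

lemma
  assumes g: "g \<in> L2_0 \<omega>"
  shows Sstar_in_L2_0: "Sstar g \<in> L2_0 \<omega>"
    and integral_Sstar_square_le: "(\<integral>x. (Sstar g x)\<^sup>2 \<partial>\<omega>) \<le> (\<integral>x. (g x)\<^sup>2 \<partial>\<omega>)"
proof -
  show h: "Sstar g \<in> L2_0 \<omega>" using adjoint g unfolding is_adjoint_def by blast
  define a where "a = (\<integral>x. (Sstar g x)\<^sup>2 \<partial>\<omega>)"
  define b where "b = (\<integral>x. (g x)\<^sup>2 \<partial>\<omega>)"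
  note h_m = L2_0D(1)[OF h] and h2 = L2_0D(2)[OF h]
  have "a = L2_inner \<omega> (kop S (Sstar g)) g"
    using adjoint h g unfolding is_adjoint_def a_def L2_inner_def by (simp add: power2_eq_square)
  then have "a\<^sup>2 \<le> (\<integral>x. (kop S (Sstar g) x)\<^sup>2 \<partial>\<omega>) * b"
    unfolding L2_inner_def b_def
    using Cauchy_Schwarz_integral[OF measurable_kop[OF markov_S h_m] L2_0D(1)[OF g]
        integrable_kop_square[OF prob_space markov_S invariant_S h_m h2] L2_0D(2)[OF g]] by simp
  also have "\<dots> \<le> a * b"
    unfolding a_def b_def
    by (rule mult_right_mono[OF integral_kop_square_le[OF prob_space markov_S invariant_S h_m h2]]) simp
  finally have "a * a \<le> a * b" by (simp add: power2_eq_square)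
  moreover have "0 \<le> a" "0 \<le> b" unfolding a_def b_def by simp_all
  ultimately have "a \<le> b" using mult_le_cancel_left_pos[of a a b] by (cases "a = 0") auto
  then show "(\<integral>x. (Sstar g x)\<^sup>2 \<partial>\<omega>) \<le> (\<integral>x. (g x)\<^sup>2 \<partial>\<omega>)" unfolding a_def b_def .
qed

lemma kop_T_square_le_on_block:
  assumes h: "h \<in> borel_measurable \<omega>" and y: "y \<in> Y k"
    and T_h2: "integrable (T y) (\<lambda>x. (h x)\<^sup>2)" and Tk_h2: "integrable (Tk k y) (\<lambda>x. (h x)\<^sup>2)"
  shows "(kop T h y)\<^sup>2 \<le> c * (kop (Tk k) h y)\<^sup>2 + kop T (\<lambda>x. (h x)\<^sup>2) y - c * kop (Tk k) (\<lambda>x. (h x)\<^sup>2) y"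
proof -
  have y_\<omega>: "y \<in> space \<omega>" using y block_subset_space by blast
  have y_k: "y \<in> space (restr_prob \<omega> (Y k))"
    using y positive_event.space_restr_prob[OF positive_event_block] by simp
  have sets_T: "sets (T y) = sets \<omega>" by (rule sets_markov_kernel[OF markov_T y_\<omega>])
  have sets_Tk: "sets (Tk k y) = sets (restrict_space (T y) (Y k))"
    using sets_markov_kernel[OF markov_Tk y_k] positive_event.sets_restr_prob[OF positive_event_block]
      sets_restrict_space_cong[OF sets_T] by simp
  have "c * ((\<integral>x. (h x)\<^sup>2 \<partial>Tk k y) - (\<integral>x. h x \<partial>Tk k y)\<^sup>2) \<le> (\<integral>x. (h x)\<^sup>2 \<partial>T y) - (\<integral>x. h x \<partial>T y)\<^sup>2"
  proof (rule variance_dominated_restrict[OF _ _ _ sets_Tk c_nonneg _ _ T_h2 Tk_h2])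
    show "Y k \<in> sets (T y)" using sets_T sets_block by simp
    show "prob_space (T y)" by (rule prob_space_markov_kernel[OF markov_T y_\<omega>])
    show "prob_space (Tk k y)" by (rule prob_space_markov_kernel[OF markov_Tk y_k])
    show "c * measure (Tk k y) B \<le> measure (T y) B" if "B \<in> sets (Tk k y)" for B
      using T_dominates[OF y, of B] that sets_markov_kernel[OF markov_Tk y_k] by simp
    show "h \<in> borel_measurable (T y)" using h measurable_cong_sets[OF sets_T refl] by blast
  qed
  then show ?thesis unfolding kop_def by (simp add: algebra_simps)
qed

lemma local_inequality:
  fixes k :: 'k
  assumes h: "h \<in> borel_measurable \<omega>" and h2: "integrable \<omega> (\<lambda>x. (h x)\<^sup>2)"
  defines "\<omega>\<^sub>k \<equiv> restr_prob \<omega> (Y k)"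
  shows "(\<integral>y. (kop T h y)\<^sup>2 \<partial>\<omega>\<^sub>k) \<le> (\<integral>y. kop T (\<lambda>x. (h x)\<^sup>2) y \<partial>\<omega>\<^sub>k)
       - c * (1 - sup_local_norm_sq) * ((\<integral>x. (h x)\<^sup>2 \<partial>\<omega>\<^sub>k) - (\<integral>x. h x \<partial>\<omega>\<^sub>k)\<^sup>2)"
proof -
  interpret positive_event \<omega> "Y k" by (rule positive_event_block)
  note local = local_markov_kernel[of k, folded \<omega>\<^sub>k_def]
  note T = prob_space markov_T invariant_T
  have h_k: "h \<in> borel_measurable \<omega>\<^sub>k" unfolding \<omega>\<^sub>k_def by (rule measurable_restr_prob[OF h])
  have h2_k: "integrable \<omega>\<^sub>k (\<lambda>x. (h x)\<^sup>2)" unfolding \<omega>\<^sub>k_def by (rule integrable_restr_prob[OF h2])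
  have Th2: "integrable \<omega>\<^sub>k (\<lambda>y. (kop T h y)\<^sup>2)"
    unfolding \<omega>\<^sub>k_def by (rule integrable_restr_prob[OF integrable_kop_square[OF T h h2]])
  have T_h2: "integrable \<omega>\<^sub>k (kop T (\<lambda>x. (h x)\<^sup>2))"
    unfolding \<omega>\<^sub>k_def by (rule integrable_restr_prob[OF integrable_kop[OF T h2]])
  define X where "X = (\<integral>x. (h x)\<^sup>2 \<partial>\<omega>\<^sub>k)"
  define a where "a = (\<integral>x. h x \<partial>\<omega>\<^sub>k)"
  have pointwise: "AE y in \<omega>\<^sub>k. (kop T h y)\<^sup>2 \<le>
      c * (kop (Tk k) h y)\<^sup>2 + kop T (\<lambda>x. (h x)\<^sup>2) y - c * kop (Tk k) (\<lambda>x. (h x)\<^sup>2) y"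
  proof -
    have "AE y in \<omega>\<^sub>k. integrable (T y) (\<lambda>x. (h x)\<^sup>2)"
      unfolding \<omega>\<^sub>k_def by (rule AE_restr_prob[OF AE_integrable_markov_kernel[OF T h2]])
    moreover have "AE y in \<omega>\<^sub>k. y \<in> Y k"
      by (rule AE_I2) (simp add: \<omega>\<^sub>k_def space_restr_prob)
    ultimately show ?thesis
      using AE_integrable_markov_kernel[OF local h2_k]
      by eventually_elim (rule kop_T_square_le_on_block[OF h])
  qed
  have "(\<integral>y. (kop T h y)\<^sup>2 \<partial>\<omega>\<^sub>k) \<le>
      (\<integral>y. c * (kop (Tk k) h y)\<^sup>2 + kop T (\<lambda>x. (h x)\<^sup>2) y - c * kop (Tk k) (\<lambda>x. (h x)\<^sup>2) y \<partial>\<omega>\<^sub>k)"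
    using integrable_kop_square[OF local h_k h2_k] T_h2 integrable_kop[OF local h2_k]
    by (intro integral_mono_AE[OF Th2 _ pointwise]) auto
  also have "\<dots> = c * (\<integral>y. (kop (Tk k) h y)\<^sup>2 \<partial>\<omega>\<^sub>k) + (\<integral>y. kop T (\<lambda>x. (h x)\<^sup>2) y \<partial>\<omega>\<^sub>k) - c * X"
    using integrable_kop_square[OF local h_k h2_k] T_h2 integrable_kop[OF local h2_k]
      integral_kop[OF local h2_k]
    unfolding X_def by (simp add: Bochner_Integration.integral_diff Bochner_Integration.integral_add)
  finally have global: "(\<integral>y. (kop T h y)\<^sup>2 \<partial>\<omega>\<^sub>k) \<le>
      c * (\<integral>y. (kop (Tk k) h y)\<^sup>2 \<partial>\<omega>\<^sub>k) + (\<integral>y. kop T (\<lambda>x. (h x)\<^sup>2) y \<partial>\<omega>\<^sub>k) - c * X" .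
  have "(\<integral>y. (kop (Tk k) h y)\<^sup>2 \<partial>\<omega>\<^sub>k) \<le> sup_local_norm_sq * (X - a\<^sup>2) + a\<^sup>2"
  proof -
    have "0 \<le> X - a\<^sup>2"
      using square_integral_le_integral_square[OF local(1) h_k h2_k] unfolding X_def a_def by simp
    then have "(local_norm k)\<^sup>2 * (X - a\<^sup>2) \<le> sup_local_norm_sq * (X - a\<^sup>2)"
      by (rule mult_right_mono[OF local_norm_sq_le_sup])
    then show ?thesis
      using integral_kop_square_le_variance[OF local h_k h2_k] unfolding X_def a_def \<omega>\<^sub>k_def by simp
  qed
  then have "c * (\<integral>y. (kop (Tk k) h y)\<^sup>2 \<partial>\<omega>\<^sub>k) \<le> c * (sup_local_norm_sq * (X - a\<^sup>2) + a\<^sup>2)"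
    by (rule mult_left_mono[OF _ c_nonneg])
  moreover have "c * (sup_local_norm_sq * (X - a\<^sup>2) + a\<^sup>2) - c * X = - (c * (1 - sup_local_norm_sq) * (X - a\<^sup>2))"
    by (simp add: algebra_simps)
  ultimately show ?thesis
    using global unfolding X_def[symmetric] a_def[symmetric] by linarith
qed

lemma global_inequality:
  assumes h: "h \<in> borel_measurable \<omega>" and h2: "integrable \<omega> (\<lambda>x. (h x)\<^sup>2)"
  shows "(\<integral>y. (kop T h y)\<^sup>2 \<partial>\<omega>) \<le> (\<integral>x. (h x)\<^sup>2 \<partial>\<omega>)
    - c * (1 - sup_local_norm_sq) * ((\<integral>x. (h x)\<^sup>2 \<partial>\<omega>) - (\<integral>k. (block_mean h k)\<^sup>2 \<partial>bar_measure \<omega> Y))"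
proof -
  note T = prob_space markov_T invariant_T
  define a where "a = c * (1 - sup_local_norm_sq)"
  let ?Th2 = "\<lambda>y. (kop T h y)\<^sup>2" and ?T_h2 = "kop T (\<lambda>x. (h x)\<^sup>2)" and ?h2 = "\<lambda>x. (h x)\<^sup>2"
  have Th2: "integrable \<omega> ?Th2" and T_h2: "integrable \<omega> ?T_h2"
    using integrable_kop_square[OF T h h2] integrable_kop[OF T h2] by auto
  have m2: "integrable (count_space UNIV) (\<lambda>k. weight k * (block_mean h k)\<^sup>2)"
    using integrable_block_mean_square[OF h h2] unfolding integrable_bar_measure_iff_weighted .
  have block: "block_integral ?Th2 k \<le>
      block_integral ?T_h2 k - a * (block_integral ?h2 k - weight k * (block_mean h k)\<^sup>2)" for k
  proof -
    have "block_mean ?Th2 k \<le> block_mean ?T_h2 k - a * (block_mean ?h2 k - (block_mean h k)\<^sup>2)"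
      using local_inequality[OF h h2, of k] Th2 T_h2 h2
      unfolding a_def by (simp add: integral_restr_prob_block borel_measurable_integrable h)
    from mult_left_mono[OF this, of "weight k"] show ?thesis
      using block_positive[of k] by (simp add: block_mean_def algebra_simps)
  qed
  have "(\<integral>y. ?Th2 y \<partial>\<omega>) = (\<integral>k. block_integral ?Th2 k \<partial>count_space UNIV)"
    by (rule integral_block_integral[OF Th2, symmetric])
  also have "\<dots> \<le> (\<integral>k. block_integral ?T_h2 k
      - a * (block_integral ?h2 k - weight k * (block_mean h k)\<^sup>2) \<partial>count_space UNIV)"
    using integrable_block_integral[OF Th2] integrable_block_integral[OF T_h2]
      integrable_block_integral[OF h2] m2
    by (intro integral_mono) (auto intro: block)
  also have "\<dots> = (\<integral>k. block_integral ?T_h2 k \<partial>count_space UNIV)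
      - a * ((\<integral>k. block_integral ?h2 k \<partial>count_space UNIV)
        - (\<integral>k. weight k * (block_mean h k)\<^sup>2 \<partial>count_space UNIV))"
    using integrable_block_integral[OF T_h2] integrable_block_integral[OF h2] m2 by simp
  also have "\<dots> = (\<integral>x. (h x)\<^sup>2 \<partial>\<omega>)
      - a * ((\<integral>x. (h x)\<^sup>2 \<partial>\<omega>) - (\<integral>k. (block_mean h k)\<^sup>2 \<partial>bar_measure \<omega> Y))"
    unfolding integral_block_integral[OF T_h2] integral_block_integral[OF h2] integral_kop[OF T h2]
      integral_bar_measure_weighted ..
  finally show ?thesis unfolding a_def .
qed

lemma between_block_energy_le:
  assumes g: "g \<in> L2_0 \<omega>" and g_le: "(\<integral>x. (g x)\<^sup>2 \<partial>\<omega>) \<le> 1"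
  shows "(\<integral>k. (block_mean (Sstar g) k)\<^sup>2 \<partial>bar_measure \<omega> Y) \<le> bar_norm"
proof -
  define h where "h = Sstar g"
  define m where "m = block_mean h"
  define u where "u y = m (block_index y)" for y
  define M where "M = (\<integral>k. (m k)\<^sup>2 \<partial>bar_measure \<omega> Y)"
  have h: "h \<in> L2_0 \<omega>" unfolding h_def by (rule Sstar_in_L2_0[OF g])
  have m: "m \<in> L2_0 (bar_measure \<omega> Y)" unfolding m_def by (rule block_mean_in_L2_0[OF h])
  have u: "u \<in> L2_0 \<omega>" unfolding u_def by (rule block_function_in_L2_0[OF m])
  have Su: "kop S u \<in> borel_measurable \<omega>" "integrable \<omega> (\<lambda>y. (kop S u y)\<^sup>2)"
    using measurable_kop[OF markov_S L2_0D(1)[OF u]]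
      integrable_kop_square[OF prob_space markov_S invariant_S L2_0D(1,2)[OF u]] by auto
  have "M = (\<integral>y. u y * h y \<partial>\<omega>)"
    unfolding M_def u_def m_def by (rule integral_block_mean_mult[OF L2_0D(1,2)[OF h], symmetric])
  also have "\<dots> = (\<integral>y. kop S u y * g y \<partial>\<omega>)"
    using adjoint u g unfolding is_adjoint_def L2_inner_def h_def by simp
  finally have "M\<^sup>2 \<le> (\<integral>y. (kop S u y)\<^sup>2 \<partial>\<omega>) * (\<integral>y. (g y)\<^sup>2 \<partial>\<omega>)"
    using Cauchy_Schwarz_integral[OF Su(1) L2_0D(1)[OF g] Su(2) L2_0D(2)[OF g]] by simp
  also have "\<dots> \<le> (\<integral>y. (kop S u y)\<^sup>2 \<partial>\<omega>)"
    using g_le by (intro mult_left_le) auto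
  also have "\<dots> \<le> bar_norm * M"
    unfolding M_def u_def by (rule integral_kop_block_function_square_le[OF m])
  finally have "M * M \<le> bar_norm * M" by (simp add: power2_eq_square)
  moreover have "0 \<le> M" unfolding M_def by simp
  ultimately have "M \<le> bar_norm"
    using bar_norm_nonneg mult_le_cancel_right_pos[of M M bar_norm] by (cases "M = 0") auto
  then show ?thesis unfolding M_def m_def h_def .
qed

lemma main_inequality:
  "1 - (op_norm \<omega> (kop T \<circ> Sstar))\<^sup>2 \<ge> c\<^sup>2 * (1 - sup_local_norm_sq) * (1 - bar_norm)"
proof -
  define a where "a = c * (1 - sup_local_norm_sq)"
  have a: "0 \<le> a" "a \<le> 1"
    unfolding a_def using c_nonneg c_le_1 sup_local_norm_sq_nonneg sup_local_norm_sq_le_1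
    by (simp_all add: mult_le_one)
  define B where "B = 1 - a * (1 - bar_norm)"
  have B: "0 \<le> B"
    unfolding B_def using a bar_norm_nonneg bar_norm_le_1 by (simp add: mult_le_one)
  have norm_le: "L2_norm \<omega> ((kop T \<circ> Sstar) g) \<le> sqrt B"
    if g: "g \<in> L2_0 \<omega>" and g_le: "L2_norm \<omega> g \<le> 1" for g
  proof -
    define h where "h = Sstar g"
    have g2: "(\<integral>x. (g x)\<^sup>2 \<partial>\<omega>) \<le> 1" using g_le unfolding L2_norm_def by simp
    have h: "h \<in> L2_0 \<omega>" unfolding h_def by (rule Sstar_in_L2_0[OF g])
    have h2: "(\<integral>x. (h x)\<^sup>2 \<partial>\<omega>) \<le> 1"
      using integral_Sstar_square_le[OF g] g2 unfolding h_def by linarith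
    have "(\<integral>y. (kop T h y)\<^sup>2 \<partial>\<omega>) \<le>
        (1 - a) * (\<integral>x. (h x)\<^sup>2 \<partial>\<omega>) + a * (\<integral>k. (block_mean h k)\<^sup>2 \<partial>bar_measure \<omega> Y)"
      using global_inequality[OF L2_0D(1,2)[OF h]] unfolding a_def by (simp add: algebra_simps)
    also have "\<dots> \<le> (1 - a) * 1 + a * bar_norm"
      using between_block_energy_le[OF g g2] h2 a unfolding h_def
      by (intro add_mono mult_left_mono) auto
    also have "\<dots> = B" unfolding B_def by (simp add: algebra_simps)
    finally show ?thesis unfolding L2_norm_def h_def by simp
  qed
  have "(op_norm \<omega> (kop T \<circ> Sstar))\<^sup>2 \<le> (sqrt B)\<^sup>2"
    using op_norm_le[OF norm_le] op_norm_nonneg[OF norm_le] by (intro power_mono)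
  then have "(op_norm \<omega> (kop T \<circ> Sstar))\<^sup>2 \<le> B" using B by simp
  moreover have "c\<^sup>2 * (1 - sup_local_norm_sq) * (1 - bar_norm) \<le> a * (1 - bar_norm)"
  proof -
    have "c\<^sup>2 \<le> c" using c_nonneg c_le_1 by (simp add: power2_eq_square mult_left_le_one_le)
    then have "c\<^sup>2 * ((1 - sup_local_norm_sq) * (1 - bar_norm)) \<le> c * ((1 - sup_local_norm_sq) * (1 - bar_norm))"
      by (rule mult_right_mono) (use sup_local_norm_sq_le_1 bar_norm_le_1 in simp)
    then show ?thesis unfolding a_def by (simp add: ac_simps)
  qed
  ultimately show ?thesis unfolding B_def by linarith
qed

end


theorem mainTheorem3:
  fixes \<omega> :: "'a measure"
    and Y :: "'k::countable \<Rightarrow> 'a set"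
    and T S :: "'a \<Rightarrow> 'a measure"
    and Sstar :: "('a \<Rightarrow> real) \<Rightarrow> ('a \<Rightarrow> real)"
    and Tk :: "'k \<Rightarrow> 'a \<Rightarrow> 'a measure"
    and c :: real
  assumes "prob_space \<omega>"
    and "\<And>k. Y k \<in> sets \<omega>"
    and "disjoint_family Y"
    and "(\<Union>k. Y k) = space \<omega>"
    and "\<And>k. measure \<omega> (Y k) > 0"
    and "markov_kernel \<omega> T" and "invariant \<omega> T"
    and "markov_kernel \<omega> S" and "invariant \<omega> S"
    and "is_adjoint \<omega> S Sstar"
    and "\<And>k. markov_kernel (restr_prob \<omega> (Y k)) (Tk k)"
    and "\<And>k. invariant (restr_prob \<omega> (Y k)) (Tk k)"
    and "0 \<le> c" and "c \<le> 1"
    and "\<And>k y B. y \<in> Y k \<Longrightarrow> B \<in> sets (restr_prob \<omega> (Y k)) \<Longrightarrow>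
           measure (T y) B \<ge> c * measure (Tk k y) B"
  shows "1 - (op_norm \<omega> (kop T \<circ> Sstar))\<^sup>2 \<ge>
         c\<^sup>2 * (1 - (SUP k. (op_norm (restr_prob \<omega> (Y k)) (kop (Tk k)))\<^sup>2))
             * (1 - op_norm (bar_measure \<omega> Y) (kop (bar_kernel \<omega> Y S)))"
proof -
  interpret markov_decomposition \<omega> Y S T Sstar Tk c
    by (intro markov_decomposition.intro partition_kernel.intro positive_partition.intro
        partition_kernel_axioms.intro markov_decomposition_axioms.intro) (rule assms; assumption?)+
  show ?thesis by (rule main_inequality)
qed

end
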